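(* Let $\mu$ be an infinite regular cardinal and let $\rho_1$ be obtained by walking along a weakly coherent $\mu$-bounded $C$-sequence $\vec C=\langle C_\delta\mid\delta<\mu^+\rangle$. Suppose that there is a club $D\subseteq\mu^+$ such that for every $\delta\in E^{\mu^+}_\mu\cap D$ and every pair $\alpha<\beta$ of successive elements of $C_\delta$, $\mathrm{otp}(C_\beta\cap\alpha)>\mathrm{otp}(C_\delta\cap\alpha)+1$. Then $T(\rho_1)$ is special.
   Context: A $C$-sequence over $\mu^+$ is $\langle C_\delta\mid\delta<\mu^+\rangle$, each $C_\delta$ a closed subset of $\delta$ with $\sup(C_\delta)=\sup(\delta)$; $\mu$-bounded: $\mathrm{otp}(C_\delta)\le\mu$ for all $\delta$; weakly coherent: $|\{C_\delta\cap\epsilon\mid\delta<\mu^+\}|\le\mu$ for all $\epsilon<\mu^+$. $E^{\mu^+}_\mu=\{\alpha<\mu^+\mid\mathrm{cf}(\alpha)=\mu\}$. Walks: $\mathrm{Tr}(\beta,\gamma)(0)=\gamma$, $\mathrm{Tr}(\beta,\gamma)(n)=\min(C_{\mathrm{Tr}(\beta,\gamma)(n-1)}\setminus\beta)$ if $\mathrm{Tr}(\beta,\gamma)(n-1)>\beta$, else $\beta$; $\rho_2(\beta,\gamma)$ least $l$ with $\mathrm{Tr}(\beta,\gamma)(l)=\beta$; $\rho_1(\beta,\gamma)=\max\{\mathrm{otp}(C_{\mathrm{Tr}(\beta,\gamma)(n)}\cap\beta)\mid n<\rho_2(\beta,\gamma)\}$. $T(\rho_1)=\{\rho_{1\delta}\restriction\gamma\mid\gamma\le\delta<\mu^+\}$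 ordered by $\subseteq$, where $\rho_{1\delta}(\xi)=\rho_1(\xi,\delta)$. A $\mu^+$-tree $(T,<_T)$ (height $\mu^+$, levels of size $\le\mu$) is special iff there is $f:T\to T$ with $f(x)<_Tx$ for non-minimal $x$ and each $f^{-1}\{z\}$ covered by at most $\mu$ antichains. *)

theory Defs
  imports Main "HOL-Library.Equipollence"
begin

text \<open>Ordinals below mu^+ are modelled as the elements of a type 'a of class wellorder
  whose order type is mu^+.  The cardinal mu itself is an element m of 'a
  (mu < mu^+), and all ordinals <= mu (order types, values of rho_1) live in 'a.\<close>

definition below :: "'a::wellorder \<Rightarrow> 'a set" where
  "below x = {y. y < x}"

definition is_succ_of_regular :: "'a::wellorder \<Rightarrow> bool" where
  "is_succ_of_regular m \<longleftrightarrow>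
     infinite (below m) \<and>
     (\<forall>x<m. below x \<prec> below m) \<and>
     (\<forall>X \<subseteq> below m. (\<forall>x<m. \<exists>y\<in>X. x \<le> y) \<longrightarrow> X \<approx> below m) \<and>
     (\<forall>x::'a. below x \<lesssim> below m) \<and>
     \<not> {y. y < m \<or> m \<le> y} \<lesssim> below m"

definition otp :: "'a::wellorder set \<Rightarrow> 'a" where
  "otp X = (THE t. \<exists>f. bij_betw f X (below t) \<and> strict_mono_on X f)"

definition osup :: "'a::wellorder set \<Rightarrow> 'a" where
  "osup X = (LEAST s. \<forall>x\<in>X. x \<le> s)"

definition osucc :: "'a::wellorder \<Rightarrow> 'a" where
  "osucc x = (LEAST y. x < y)"

definition is_limit_pt :: "'a::wellorder set \<Rightarrow> 'a \<Rightarrow> bool" where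
  "is_limit_pt X a \<longleftrightarrow> (\<exists>g\<in>X. g < a) \<and> (\<forall>b<a. \<exists>g\<in>X. b < g \<and> g < a)"

definition cof :: "'a::wellorder \<Rightarrow> 'a" where
  "cof a = (LEAST t. \<exists>X \<subseteq> below a. (\<forall>b<a. \<exists>x\<in>X. b \<le> x) \<and> otp X = t)"

definition C_sequence :: "('a::wellorder \<Rightarrow> 'a set) \<Rightarrow> bool" where
  "C_sequence C \<longleftrightarrow>
     (\<forall>d. C d \<subseteq> below d \<and>
          (\<forall>a<d. is_limit_pt (C d) a \<longrightarrow> a \<in> C d) \<and>
          osup (C d) = osup (below d))"

definition mu_bounded :: "'a::wellorder \<Rightarrow> ('a \<Rightarrow> 'a set) \<Rightarrow> bool" where
  "mu_bounded m C \<longleftrightarrow> (\<forall>d. otp (C d) \<le> m)"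

definition weakly_coherent :: "'a::wellorder \<Rightarrow> ('a \<Rightarrow> 'a set) \<Rightarrow> bool" where
  "weakly_coherent m C \<longleftrightarrow> (\<forall>e::'a. {C d \<inter> below e | d. True} \<lesssim> below m)"

definition club :: "'a::wellorder set \<Rightarrow> bool" where
  "club D \<longleftrightarrow> (\<forall>x. \<exists>y\<in>D. x \<le> y) \<and> (\<forall>a. is_limit_pt D a \<longrightarrow> a \<in> D)"

primrec tr :: "('a::wellorder \<Rightarrow> 'a set) \<Rightarrow> 'a \<Rightarrow> 'a \<Rightarrow> nat \<Rightarrow> 'a" where
  "tr C b g 0 = g"
| "tr C b g (Suc n) =
     (if b < tr C b g n then (LEAST x. x \<in> C (tr C b g n) \<and> b \<le> x) else b)"

definition rho2 :: "('a::wellorder \<Rightarrow> 'a set) \<Rightarrow> 'a \<Rightarrow> 'a \<Rightarrow> nat" where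
  "rho2 C b g = (LEAST l. tr C b g l = b)"

definition rho1 :: "('a::wellorder \<Rightarrow> 'a set) \<Rightarrow> 'a \<Rightarrow> 'a \<Rightarrow> 'a" where
  "rho1 C b g = Max ((\<lambda>n. otp (C (tr C b g n) \<inter> below b)) ` {..<rho2 C b g})"

text \<open>The tree T(rho_1): nodes rho_{1 d} restricted to g, as partial maps with domain below g,
  ordered by map inclusion.\<close>
definition T_rho1 :: "('a::wellorder \<Rightarrow> 'a set) \<Rightarrow> ('a \<rightharpoonup> 'a) set" where
  "T_rho1 C = {(\<lambda>x. if x < g then Some (rho1 C x d) else None) | g d. g \<le> d}"

definition tree_less :: "('a \<rightharpoonup> 'b) \<Rightarrow> ('a \<rightharpoonup> 'b) \<Rightarrow> bool" where
  "tree_less s t \<longleftrightarrow> s \<subseteq>\<^sub>m t \<and> s \<noteq> t"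

definition antichain_t :: "('a \<rightharpoonup> 'b) set \<Rightarrow> bool" where
  "antichain_t A \<longleftrightarrow> (\<forall>x\<in>A. \<forall>y\<in>A. \<not> tree_less x y)"

definition special :: "'k::wellorder \<Rightarrow> ('a \<rightharpoonup> 'b) set \<Rightarrow> bool" where
  "special m T \<longleftrightarrow> (\<exists>f. (\<forall>x\<in>T. f x \<in> T) \<and>
     (\<forall>x\<in>T. (\<exists>y\<in>T. tree_less y x) \<longrightarrow> tree_less (f x) x) \<and>
     (\<forall>z\<in>T. \<exists>\<A>. \<A> \<lesssim> below m \<and> (\<forall>A\<in>\<A>. antichain_t A) \<and>
                 {x\<in>T. f x = z} \<subseteq> \<Union>\<A>))"

end

theory Submission
  imports Defs
begin

text \<open>Send a node \<open>x\<close> of \<open>T(\<rho>\<^sub>1)\<close> of height \<open>\<gamma>\<close> to an initial segment \<open>f(x)\<close> as follows.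

  If some sublevel \<open>{\<xi> < \<gamma> | x(\<xi>) \<le> \<nu>}\<close> with \<open>\<nu> < \<mu>\<close> is cofinal in \<open>\<gamma>\<close>, \<open>f(x)\<close> is the root.
  Such a sublevel of \<open>\<rho>\<^sub>1\<^sub>\<delta>\<close> has size \<open>< \<mu>\<close> (by induction on \<open>\<delta>\<close>: the first step of the walk
  from \<open>\<delta>\<close> lands at a point of \<open>C\<^sub>\<delta>\<close> of rank \<open>\<le> \<nu>\<close>), so the pair of \<open>\<nu>\<close> and the order type of the sublevel takes at most
  \<open>\<mu>\<close> values, and two nodes sharing it are incomparable: the sublevel of the higher
  node is cofinal above the height of the lower one.

  Otherwise \<open>\<gamma>\<close> is a limit of cofinality \<open>\<mu>\<close>.  If \<open>\<gamma> \<in> D\<close>, coherence of \<open>\<rho>\<^sub>1\<close> gives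
  \<open>x(\<alpha>) = otp(C\<^sub>\<gamma> \<inter> \<alpha>)\<close> for all large \<open>\<alpha> \<in> C\<^sub>\<gamma>\<close>, and the hypothesis on \<open>D\<close> makes \<open>x\<close> jump
  above \<open>x(\<alpha>) + 1\<close> strictly between successive points of \<open>C\<^sub>\<gamma>\<close>; let \<open>f(x) = x \<restriction> p\<close> for a
  point \<open>p\<close> from which this pattern holds.  If nodes \<open>s < t\<close> of heights \<open>\<gamma>\<^sub>s < \<gamma>\<^sub>t\<close> share
  \<open>p\<close>, then \<open>C\<^bsub>\<gamma>\<^sub>t\<^esub>\<close> is bounded below \<open>\<gamma>\<^sub>s\<close> (which has cofinality \<open>\<mu>\<close>), so a single gap of
  \<open>C\<^bsub>\<gamma>\<^sub>t\<^esub>\<close> covers a successive pair of \<open>C\<^bsub>\<gamma>\<^sub>s\<^esub>\<close>, and the two patterns contradict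
  each other on the common part of \<open>s\<close> and \<open>t\<close>.

  If \<open>\<gamma> \<notin> D\<close>, let \<open>f(x) = x \<restriction> sup(D \<inter> \<gamma>)\<close>; then the height of \<open>x\<close> is bounded by the
  next point of \<open>D\<close> after the height of \<open>f(x)\<close>, so this part of a fibre lies in at most
  \<open>\<mu>\<close> levels, each of which is an antichain.\<close>

section \<open>Order types\<close>

definition successive :: "'a::order set \<Rightarrow> 'a \<Rightarrow> 'a \<Rightarrow> bool" where
  "successive X a b \<longleftrightarrow> a \<in> X \<and> b \<in> X \<and> a < b \<and> (\<forall>y\<in>X. \<not> (a < y \<and> y < b))"

lemma successive_exists:
  fixes X :: "'a::wellorder set"
  assumes "y \<in> X" "a \<in> X" "a < y"
  obtains b where "successive X a b"
proof
  let ?b = "LEAST y. y \<in> X \<and> a < y"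
  have "?b \<in> X \<and> a < ?b" using LeastI[of "\<lambda>y. y \<in> X \<and> a < y"] assms by blast
  then show "successive X a ?b"
    unfolding successive_def using assms(2) not_less_Least by blast
qed

definition ord0 :: "'a::wellorder" where
  "ord0 = (LEAST x. True)"

lemma ord0_le: "ord0 \<le> (x::'a::wellorder)"
  unfolding ord0_def by (rule Least_le) simp

lemma ord0_less_iff: "ord0 < (x::'a::wellorder) \<longleftrightarrow> x \<noteq> ord0"
  using ord0_le[of x] by auto

lemma less_osucc: "y < z \<Longrightarrow> y < osucc y"
  unfolding osucc_def by (rule LeastI)

lemma osucc_le: "y < z \<Longrightarrow> osucc y \<le> z"
  unfolding osucc_def by (rule Least_le)

lemma below_inject: "below (a::'a::wellorder) = below b \<Longrightarrow> a = b"
  by (metis below_def linorder_neq_iff mem_Collect_eq order_less_irrefl)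

text \<open>\<open>orank X y\<close> is the order type of \<open>X \<inter> below y\<close> (\<open>otp_Int_below\<close>).  It is defined by
  well-founded recursion because \<open>otp\<close> is a definite description, whose existence is only
  established through \<open>orank\<close>.\<close>

definition orank :: "'a::wellorder set \<Rightarrow> 'a \<Rightarrow> 'a" where
  "orank X = wfrec {(x, y). x < y} (\<lambda>f y. LEAST z. \<forall>y'\<in>X. y' < y \<longrightarrow> f y' < z)"

lemma orank_eq: "orank X y = (LEAST z. \<forall>y'\<in>X. y' < y \<longrightarrow> orank X y' < z)"
proof -
  let ?R = "{(x::'a, y). x < y}"
  let ?H = "\<lambda>f y. LEAST z. \<forall>y'\<in>X. y' < y \<longrightarrow> f y' < z"
  have "orank X y = wfrec ?R ?H y" by (simp add: orank_def)
  also have "\<dots> = ?H (cut (wfrec ?R ?H) ?R y) y" by (rule wfrec[OF wf])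
  also have "\<dots> = (LEAST z. \<forall>y'\<in>X. y' < y \<longrightarrow> orank X y' < z)"
    by (rule arg_cong[where f = Least]) (auto simp: cut_apply orank_def fun_eq_iff)
  finally show ?thesis .
qed

lemma orank_le: "orank X y \<le> y"
proof (induction y rule: less_induct)
  case (less y)
  show ?case
    by (subst orank_eq, rule Least_le) (use less in \<open>auto intro: le_less_trans\<close>)
qed

lemma orank_less:
  assumes "y' \<in> X" "y' < y"
  shows "orank X y' < orank X y"
proof -
  have "\<forall>y'\<in>X. y' < y \<longrightarrow> orank X y' < y" using orank_le le_less_trans by blast
  then have "\<forall>y'\<in>X. y' < y \<longrightarrow> orank X y' < orank X y"
    by (subst (2) orank_eq, rule LeastI[where k = y])
  then show ?thesis using assms by blast
qed

lemma orank_mono: "a \<le> b \<Longrightarrow> orank X a \<le> orank X b"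
  by (subst orank_eq[of X a], rule Least_le) (auto intro: orank_less less_le_trans)

lemma orank_less_across: "y \<in> X \<Longrightarrow> a \<le> y \<Longrightarrow> y < b \<Longrightarrow> orank X a < orank X b"
  using orank_mono orank_less le_less_trans by blast

lemma orank_attained: "z < orank X y \<Longrightarrow> \<exists>y'\<in>X. y' < y \<and> orank X y' = z"
proof (induction y arbitrary: z rule: less_induct)
  case (less y)
  have "\<not> (\<forall>y'\<in>X. y' < y \<longrightarrow> orank X y' < z)"
  proof
    assume "\<forall>y'\<in>X. y' < y \<longrightarrow> orank X y' < z"
    then have "orank X y \<le> z" by (subst orank_eq, rule Least_le)
    then show False using less.prems by simp
  qed
  then obtain y' where y': "y' \<in> X" "y' < y" "z \<le> orank X y'" by (auto simp: not_less)
  show ?case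
  proof (cases "z = orank X y'")
    case False
    then have "z < orank X y'" using y' by simp
    then obtain y'' where "y'' \<in> X" "y'' < y'" "orank X y'' = z"
      using less.IH y' by blast
    then show ?thesis using y' by (auto intro: less_trans)
  qed (use y' in blast)
qed

lemma orank_successive:
  assumes "successive X a a'"
  shows "orank X a' = osucc (orank X a)"
proof -
  have "(\<forall>y'\<in>X. y' < a' \<longrightarrow> orank X y' < z) \<longleftrightarrow> orank X a < z" for z
  proof
    assume "orank X a < z"
    moreover have "y' \<in> X \<Longrightarrow> y' < a' \<Longrightarrow> y' \<le> a" for y'
      using assms by (meson not_le successive_def)
    ultimately show "\<forall>y'\<in>X. y' < a' \<longrightarrow> orank X y' < z"
      using orank_mono le_less_trans by blast
  qed (use assms in \<open>auto simp: successive_def\<close>)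
  then show ?thesis by (subst orank_eq) (simp add: osucc_def)
qed

lemma orank_eq_if_no_elem_between:
  assumes "\<xi> \<le> \<eta>" "\<forall>y\<in>X. \<xi> \<le> y \<longrightarrow> \<eta> \<le> y"
  shows "orank X \<eta> = orank X \<xi>"
proof (rule antisym)
  have "y' \<in> X \<Longrightarrow> y' < \<eta> \<Longrightarrow> orank X y' < orank X \<xi>" for y'
    using assms(2) by (meson not_le orank_less)
  then show "orank X \<eta> \<le> orank X \<xi>" by (subst orank_eq) (rule Least_le, blast)
qed (rule orank_mono[OF assms(1)])

lemma orank_Int_below: "y \<le> a \<Longrightarrow> orank (X \<inter> below a) y = orank X y"
proof (induction y rule: less_induct)
  case (less y)
  have "(\<forall>y'\<in>X \<inter> below a. y' < y \<longrightarrow> orank (X \<inter> below a) y' < z) \<longleftrightarrow>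
        (\<forall>y'\<in>X. y' < y \<longrightarrow> orank X y' < z)" for z
    using less by (auto simp: below_def)
  then show ?case by (subst orank_eq, subst (2) orank_eq) simp
qed

lemma orank_bij_betw:
  assumes "X \<subseteq> below d"
  shows "bij_betw (orank X) X (below (orank X d))" and "strict_mono_on X (orank X)"
proof -
  show sm: "strict_mono_on X (orank X)"
    by (rule strict_mono_onI) (simp add: orank_less)
  have "orank X ` X = below (orank X d)"
  proof
    show "orank X ` X \<subseteq> below (orank X d)" using assms orank_less by (auto simp: below_def)
    show "below (orank X d) \<subseteq> orank X ` X" using orank_attained by (fastforce simp: below_def)
  qed
  then show "bij_betw (orank X) X (below (orank X d))"
    using sm strict_mono_on_imp_inj_on by (auto simp: bij_betw_def)
qed

lemma order_iso_eq_orank: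
  assumes g: "bij_betw g X (below t)" "strict_mono_on X g" and "y \<in> X"
  shows "g y = orank X y"
  using \<open>y \<in> X\<close>
proof (induction y rule: less_induct)
  case (less y)
  have sm: "a \<in> X \<Longrightarrow> b \<in> X \<Longrightarrow> a < b \<Longrightarrow> g a < g b" for a b
    using g(2) strict_mono_onD by blast
  have "g y = (LEAST z. \<forall>y'\<in>X. y' < y \<longrightarrow> g y' < z)"
  proof (rule Least_equality[symmetric])
    show "\<forall>y'\<in>X. y' < y \<longrightarrow> g y' < g y" using sm less.prems by blast
  next
    fix z assume z: "\<forall>y'\<in>X. y' < y \<longrightarrow> g y' < z"
    show "g y \<le> z"
    proof (rule ccontr)
      assume "\<not> g y \<le> z"
      moreover have "g y \<in> below t" using g(1) less.prems by (auto simp: bij_betw_def)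
      ultimately have "z \<in> below t" by (auto simp: below_def)
      then obtain y'' where y'': "y'' \<in> X" "g y'' = z"
        using g(1) by (metis bij_betw_def imageE)
      then have "y \<le> y''" using z by (metis not_le order_less_irrefl)
      then have "g y \<le> g y''" using sm less.prems y''(1) by (cases "y = y''") (auto intro: less_imp_le)
      then show False using \<open>\<not> g y \<le> z\<close> y'' by simp
    qed
  qed
  also have "\<dots> = (LEAST z. \<forall>y'\<in>X. y' < y \<longrightarrow> orank X y' < z)"
    using less.IH by (metis (no_types, lifting))
  also have "\<dots> = orank X y" by (rule orank_eq[symmetric])
  finally show ?case .
qed

lemma otp_eq_orank:
  assumes "X \<subseteq> below d"
  shows "otp X = orank X d"
  unfolding otp_def
proof (rule the_equality)
  show "\<exists>f. bij_betw f X (below (orank X d)) \<and> strict_mono_on X f"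
    using orank_bij_betw[OF assms] by blast
next
  fix t :: 'a assume "\<exists>f. bij_betw f X (below t) \<and> strict_mono_on X f"
  then obtain g :: "'a \<Rightarrow> 'a" where g: "bij_betw g X (below t)" "strict_mono_on X g" by blast
  have "g ` X = orank X ` X"
    using order_iso_eq_orank[OF g] by (auto simp: image_def)
  then have "below t = below (orank X d)"
    using g(1) orank_bij_betw(1)[OF assms] by (simp add: bij_betw_def)
  then show "t = orank X d" by (rule below_inject)
qed

lemma otp_Int_below: "otp (X \<inter> below a) = orank X a"
  using otp_eq_orank[of "X \<inter> below a" a] orank_Int_below[of a a X] by auto

lemma eqpoll_below_otp: "X \<subseteq> below d \<Longrightarrow> X \<approx> below (otp X)"
  using orank_bij_betw(1)[of X d] otp_eq_orank[of X d] by (auto simp: eqpoll_def)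

lemma otp_less_if_lesspoll:
  assumes "X \<subseteq> below d" "X \<prec> below (m::'a::wellorder)"
  shows "otp X < m"
proof (rule ccontr)
  assume "\<not> otp X < m"
  then have "below m \<subseteq> below (otp X)" by (auto simp: below_def)
  then have "below m \<lesssim> X"
    using eqpoll_below_otp[OF assms(1)] by (meson eqpoll_sym lepoll_trans2 subset_imp_lepoll)
  then show False using assms(2) by (meson lepoll_antisym lesspoll_def)
qed

definition cofinal_below :: "'a::wellorder set \<Rightarrow> 'a \<Rightarrow> bool" where
  "cofinal_below A \<gamma> \<longleftrightarrow> (\<forall>b<\<gamma>. \<exists>\<xi>\<in>A. b \<le> \<xi>)"

lemma cof_le_otp: "X \<subseteq> below g \<Longrightarrow> cofinal_below X g \<Longrightarrow> cof g \<le> otp X"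
  unfolding cof_def cofinal_below_def by (rule Least_le) blast

lemma cof_attained:
  assumes "X \<subseteq> below g" "cofinal_below X g"
  obtains Y where "Y \<subseteq> below g" "cofinal_below Y g" "otp Y = cof g"
  using LeastI[of "\<lambda>t. \<exists>X\<subseteq>below g. (\<forall>b<g. \<exists>x\<in>X. b \<le> x) \<and> otp X = t" "otp X"] assms
  unfolding cof_def cofinal_below_def by blast

section \<open>Cardinals below the successor cardinal\<close>

unbundle cardinal_syntax

lemma lepoll_iff_card_of_ordLeq: "A \<lesssim> B \<longleftrightarrow> |A| \<le>o |B|"
  unfolding lepoll_def using card_of_ordLeq by blast

lemma UN_lepoll_infinite:
  assumes "infinite B" "I \<lesssim> B" "\<And>i. i \<in> I \<Longrightarrow> A i \<lesssim> B"
  shows "(\<Union>i\<in>I. A i) \<lesssim> B"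
  using card_of_UNION_ordLeq_infinite[of B I A] assms by (simp add: lepoll_iff_card_of_ordLeq)

lemma Un_lepoll_infinite:
  assumes "infinite C" "A \<lesssim> C" "B \<lesssim> C"
  shows "A \<union> B \<lesssim> C"
proof -
  have "A \<union> B = (\<Union>i\<in>{True, False}. if i then A else B)" by auto
  also have "\<dots> \<lesssim> C"
    by (rule UN_lepoll_infinite) (use assms in \<open>auto intro: finite_lepoll_infinite\<close>)
  finally show ?thesis .
qed

lemma times_self_lepoll_infinite: "infinite A \<Longrightarrow> A \<times> A \<lesssim> A"
  using card_of_Times_same_infinite ordIso_iff_ordLeq lepoll_iff_card_of_ordLeq by blast

locale succ_regular =
  fixes m :: "'a::wellorder"
  assumes succ_regular: "is_succ_of_regular m"
begin

lemma infinite_below_m: "infinite (below m)"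
  using succ_regular unfolding is_succ_of_regular_def by blast

lemma below_lesspoll_m: "x < m \<Longrightarrow> below x \<prec> below m"
  using succ_regular unfolding is_succ_of_regular_def by blast

lemma cofinal_eqpoll_m: "X \<subseteq> below m \<Longrightarrow> \<forall>x<m. \<exists>y\<in>X. x \<le> y \<Longrightarrow> X \<approx> below m"
  using succ_regular unfolding is_succ_of_regular_def by blast

lemma below_lepoll_m: "below (x::'a) \<lesssim> below m"
  using succ_regular unfolding is_succ_of_regular_def by blast

lemma UNIV_not_lepoll_m: "\<not> (UNIV::'a set) \<lesssim> below m"
proof -
  have "\<not> {y. y < m \<or> m \<le> y} \<lesssim> below m"
    using succ_regular unfolding is_succ_of_regular_def by blast
  moreover have "{y. y < m \<or> m \<le> y} = (UNIV::'a set)" by auto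
  ultimately show ?thesis by simp
qed

lemma ord0_less_m: "ord0 < m"
proof -
  obtain x where "x \<in> below m" using infinite_below_m by (metis finite.emptyI ex_in_conv)
  then show ?thesis using ord0_le[of x] by (auto simp: below_def)
qed

lemma finite_lesspoll_m: "finite X \<Longrightarrow> X \<prec> below m"
  using finite_lesspoll_infinite infinite_below_m by blast

lemma finite_lepoll_m: "finite X \<Longrightarrow> X \<lesssim> below m"
  using finite_lepoll_infinite infinite_below_m by blast

lemma insert_lesspoll_m: "X \<prec> below m \<Longrightarrow> insert a X \<prec> below m"
  by (cases "finite X") (auto intro: finite_lesspoll_m eq_lesspoll_trans infinite_insert_eqpoll)

lemma insert_lepoll_m: "X \<lesssim> below m \<Longrightarrow> insert a X \<lesssim> below m"
  using Un_lepoll_infinite[OF infinite_below_m finite_lepoll_m[of "{a}"]] by simp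

lemma no_greatest: "\<exists>z. (y::'a) < z"
proof (rule ccontr)
  assume "\<nexists>z. y < z"
  then have "\<forall>x. x \<le> y" by (auto simp: not_less)
  then have "(UNIV::'a set) = insert y (below y)" by (auto simp: below_def less_le)
  then show False using insert_lepoll_m[OF below_lepoll_m, of y y] UNIV_not_lepoll_m by simp
qed

lemma atMost_eq_insert_below: "{..x} = insert x (below x)"
  by (auto simp: below_def)

lemma atMost_lesspoll_m: "\<nu> < m \<Longrightarrow> {..\<nu>} \<prec> below m"
  unfolding atMost_eq_insert_below by (intro insert_lesspoll_m below_lesspoll_m)

lemma atMost_lepoll_m: "{..x::'a} \<lesssim> below m"
  unfolding atMost_eq_insert_below by (intro insert_lepoll_m below_lepoll_m)

lemma lesspoll_m_bounded:
  assumes "X \<prec> below m" "h ` X \<subseteq> below m"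
  obtains \<nu> where "\<nu> < m" "\<forall>x\<in>X. h x < \<nu>"
proof -
  have "\<not> h ` X \<approx> below m"
  proof
    assume "h ` X \<approx> below m"
    then have "below m \<lesssim> X" using lepoll_trans1[OF eqpoll_sym image_lepoll] by blast
    then have "X \<approx> below m" by (rule lepoll_antisym[OF lesspoll_imp_lepoll[OF assms(1)]])
    then show False using assms(1) by (simp add: lesspoll_def)
  qed
  then obtain \<nu> where "\<nu> < m" "\<forall>v\<in>h ` X. \<not> \<nu> \<le> v" using cofinal_eqpoll_m[OF assms(2)] by blast
  then show ?thesis using that by (simp add: not_le)
qed

lemma limit_if_cof_eq_m:
  assumes "cof \<gamma> = m"
  shows "\<forall>y<\<gamma>. \<exists>z. y < z \<and> z < \<gamma>"
proof (rule ccontr)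
  assume "\<not> ?thesis"
  then obtain y where y: "y < \<gamma>" "\<forall>z. y < z \<longrightarrow> \<not> z < \<gamma>" by blast
  have "cof \<gamma> \<le> otp {y}"
  proof (rule cof_le_otp)
    show "{y} \<subseteq> below \<gamma>" using y by (simp add: below_def)
    show "cofinal_below {y} \<gamma>" using y(2) unfolding cofinal_below_def by (meson insertI1 not_le)
  qed
  also have "otp {y} < m"
  proof (rule otp_less_if_lesspoll)
    show "{y} \<subseteq> below \<gamma>" using y by (simp add: below_def)
  qed (simp add: finite_lesspoll_m)
  finally have "cof \<gamma> < m" .
  then show False using assms by simp
qed

end

section \<open>Walks along a \<open>C\<close>-sequence\<close>

lemma C_sequence_subset: "C_sequence C \<Longrightarrow> C d \<subseteq> below d"
  by (simp add: C_sequence_def)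

lemma C_sequence_less: "C_sequence C \<Longrightarrow> x \<in> C d \<Longrightarrow> x < d"
  using C_sequence_subset by (fastforce simp: below_def)

lemma C_sequence_closed: "C_sequence C \<Longrightarrow> a < d \<Longrightarrow> is_limit_pt (C d) a \<Longrightarrow> a \<in> C d"
  by (simp add: C_sequence_def)

lemma osup_upper: "\<forall>z\<in>Z. z \<le> u \<Longrightarrow> x \<in> Z \<Longrightarrow> x \<le> osup Z"
  unfolding osup_def by (rule LeastI2[where a = u]) auto

lemma osup_least: "\<forall>z\<in>Z. z \<le> u \<Longrightarrow> osup Z \<le> u"
  unfolding osup_def by (rule Least_le)

lemma C_sequence_osup_mem:
  assumes C: "C_sequence C" and Z: "Z \<subseteq> C \<eta>" "x \<in> Z" and "osup Z < \<eta>"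
  shows "osup Z \<in> C \<eta>"
proof (rule ccontr)
  let ?s = "osup Z"
  assume not_mem: "?s \<notin> C \<eta>"
  have "\<forall>z\<in>Z. z \<le> \<eta>" using Z(1) C_sequence_less[OF C] by (blast intro: less_imp_le)
  then have upper: "z \<in> Z \<Longrightarrow> z < ?s" for z using osup_upper Z(1) not_mem le_neq_trans by blast
  have "\<exists>g\<in>C \<eta>. c < g \<and> g < ?s" if "c < ?s" for c
  proof (rule ccontr)
    assume "\<not> (\<exists>g\<in>C \<eta>. c < g \<and> g < ?s)"
    then have "\<forall>z\<in>Z. z \<le> c" using Z(1) upper by (meson not_le subsetD)
    then have "?s \<le> c" by (rule osup_least)
    then show False using that by simp
  qed
  then have "is_limit_pt (C \<eta>) ?s" using Z upper unfolding is_limit_pt_def by blast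
  then show False using C_sequence_closed[OF C \<open>?s < \<eta>\<close>] not_mem by blast
qed

lemma C_sequence_unbounded:
  assumes C: "C_sequence C" and b: "ord0 < b" "b < \<eta>"
  shows "\<exists>x\<in>C \<eta>. b \<le> x"
proof (rule ccontr)
  assume "\<not> (\<exists>x\<in>C \<eta>. b \<le> x)"
  then have less_b: "\<forall>x\<in>C \<eta>. x \<le> b" by (auto simp: not_le less_imp_le)
  have "b \<le> osup (below \<eta>)" using b(2) by (intro osup_upper[of _ \<eta>]) (auto simp: below_def)
  moreover have "osup (C \<eta>) = osup (below \<eta>)" using C by (simp add: C_sequence_def)
  ultimately have sup: "osup (C \<eta>) = b" using osup_least[OF less_b] by simp
  have "C \<eta> \<noteq> {}"
  proof
    assume "C \<eta> = {}"
    then have "osup (C \<eta>) = ord0" by (simp add: osup_def ord0_def)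
    then show False using sup b by simp
  qed
  then have "b \<in> C \<eta>" using C_sequence_osup_mem[OF C order_refl] sup b(2) by auto
  then show False using \<open>\<not> (\<exists>x\<in>C \<eta>. b \<le> x)\<close> by blast
qed

lemma C_sequence_cofinal_in_limit:
  assumes C: "C_sequence C" and lim: "\<forall>y<\<gamma>. \<exists>z. y < z \<and> z < \<gamma>" and "b < \<gamma>"
  shows "\<exists>y\<in>C \<gamma>. b < y"
proof -
  obtain z where z: "b < z" "z < \<gamma>" using lim \<open>b < \<gamma>\<close> by blast
  then have "ord0 < z" using ord0_le[of b] by (blast intro: le_less_trans)
  then obtain y where "y \<in> C \<gamma>" "z \<le> y" using C_sequence_unbounded[OF C _ z(2)] by blast
  then show ?thesis using z by (meson less_le_trans)
qed

lemma C_sequence_max_below: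
  assumes C: "C_sequence C" and "p \<in> C \<eta>" "p \<le> q" "q < \<eta>"
  obtains \<alpha> where "\<alpha> \<in> C \<eta>" "p \<le> \<alpha>" "\<alpha> \<le> q" "\<forall>y\<in>C \<eta>. p \<le> y \<and> y \<le> q \<longrightarrow> y \<le> \<alpha>"
proof -
  let ?Z = "{y\<in>C \<eta>. p \<le> y \<and> y \<le> q}"
  have upper: "\<forall>y\<in>C \<eta>. p \<le> y \<and> y \<le> q \<longrightarrow> y \<le> osup ?Z" using osup_upper[of ?Z q] by blast
  have "osup ?Z \<le> q" by (rule osup_least) blast
  moreover have "p \<le> osup ?Z" using upper assms(2,3) by blast
  moreover have "osup ?Z \<in> C \<eta>"
    using C_sequence_osup_mem[OF C _ _ le_less_trans[OF \<open>osup ?Z \<le> q\<close> \<open>q < \<eta>\<close>], of p] assms(2,3) by auto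
  ultimately show ?thesis using that upper by blast
qed

context
  fixes C :: "'a::wellorder \<Rightarrow> 'a set" and b :: 'a
  assumes C: "C_sequence C" and b_pos: "ord0 < b"
begin

lemma walk_step:
  assumes "b < tr C b g n"
  shows "tr C b g (Suc n) \<in> C (tr C b g n)" "b \<le> tr C b g (Suc n)" "tr C b g (Suc n) < tr C b g n"
proof -
  obtain x where x: "x \<in> C (tr C b g n)" "b \<le> x" using C_sequence_unbounded[OF C b_pos assms] by blast
  have "(LEAST x. x \<in> C (tr C b g n) \<and> b \<le> x) \<in> C (tr C b g n) \<and> b \<le> (LEAST x. x \<in> C (tr C b g n) \<and> b \<le> x)"
    by (rule LeastI[where k = x]) (use x in auto)
  then show "tr C b g (Suc n) \<in> C (tr C b g n)" "b \<le> tr C b g (Suc n)"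
    "tr C b g (Suc n) < tr C b g n"
    using assms C_sequence_less[OF C] by auto
qed

lemma walk_ge: "b \<le> g \<Longrightarrow> b \<le> tr C b g n"
proof (induction n)
  case (Suc n)
  then show ?case using walk_step(2)[of g n] by (cases "b < tr C b g n") auto
qed simp

lemma walk_reaches: "b \<le> g \<Longrightarrow> \<exists>l. tr C b g l = b"
proof (rule ccontr)
  assume g: "b \<le> g" and "\<nexists>l. tr C b g l = b"
  then have above: "b < tr C b g l" for l using walk_ge le_neq_trans by metis
  obtain l where l: "tr C b g l = (LEAST y. y \<in> range (tr C b g))"
    using LeastI[of "\<lambda>y. y \<in> range (tr C b g)", OF rangeI] by (metis rangeE)
  have "tr C b g l \<le> tr C b g (Suc l)" unfolding l by (rule Least_le) (rule rangeI)
  then show False using walk_step(3)[OF above[of l]] by simp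
qed

lemma walk_rho2: "b \<le> g \<Longrightarrow> tr C b g (rho2 C b g) = b"
  unfolding rho2_def using walk_reaches by (rule LeastI_ex)

lemma walk_less_rho2: "b \<le> g \<Longrightarrow> n < rho2 C b g \<Longrightarrow> b < tr C b g n"
  unfolding rho2_def using not_less_Least walk_ge le_neq_trans by metis

lemma rho2_pos: "b < g \<Longrightarrow> 0 < rho2 C b g"
  using walk_rho2[of g] by (cases "rho2 C b g") (auto simp: less_imp_le)

lemma walk_add: "tr C b g (n + j) = tr C b (tr C b g n) j"
  by (induction j) auto

lemma rho2_add:
  assumes "b \<le> g" "n \<le> rho2 C b g"
  shows "rho2 C b g = n + rho2 C b (tr C b g n)"
proof -
  let ?g' = "tr C b g n"
  have g': "b \<le> ?g'" using walk_ge assms(1) by blast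
  show ?thesis
    unfolding rho2_def[of C b g]
  proof (rule Least_equality)
    show "tr C b g (n + rho2 C b ?g') = b" by (simp only: walk_add walk_rho2[OF g'])
  next
    fix l assume l: "tr C b g l = b"
    show "n + rho2 C b ?g' \<le> l"
    proof (rule ccontr)
      assume "\<not> n + rho2 C b ?g' \<le> l"
      then have lt: "l < n + rho2 C b ?g'" by simp
      show False
      proof (cases "l < n")
        case True
        then have "l < rho2 C b g" using assms(2) by simp
        then show False using walk_less_rho2[OF assms(1)] l by fastforce
      next
        case False
        then obtain j where j: "l = n + j" by (metis le_add_diff_inverse not_less)
        then have "j < rho2 C b ?g'" using lt by simp
        then have "b < tr C b ?g' j" using walk_less_rho2[OF g'] by blast
        then show False using l j walk_add by simp
      qed
    qed
  qed
qed

definition rho1_set :: "'a \<Rightarrow> 'a set" where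
  "rho1_set g = (\<lambda>n. otp (C (tr C b g n) \<inter> below b)) ` {..<rho2 C b g}"

lemma rho1_eq_Max: "rho1 C b g = Max (rho1_set g)"
  by (simp add: rho1_def rho1_set_def)

lemma finite_rho1_set: "finite (rho1_set g)"
  by (simp add: rho1_set_def)

lemma rho1_set_nonempty: "b < g \<Longrightarrow> rho1_set g \<noteq> {}"
  using rho2_pos by (auto simp: rho1_set_def)

lemma rho1_set_add:
  assumes "b \<le> g" "n \<le> rho2 C b g"
  shows "rho1_set g = (\<lambda>i. otp (C (tr C b g i) \<inter> below b)) ` {..<n} \<union> rho1_set (tr C b g n)"
proof -
  have "{..<n + k} = {..<n} \<union> (\<lambda>j. n + j) ` {..<k}" for k :: nat
  proof (intro equalityI subsetI)
    fix x assume "x \<in> {..<n + k}"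
    then show "x \<in> {..<n} \<union> (\<lambda>j. n + j) ` {..<k}"
      by (cases "x < n") (auto intro: image_eqI[where x = "x - n"])
  qed auto
  then show ?thesis unfolding rho1_set_def rho2_add[OF assms]
    by (auto simp: walk_add image_Un image_image)
qed

lemma rho1_ge_in_set: "v \<in> rho1_set g \<Longrightarrow> v \<le> rho1 C b g"
  using Max_ge[OF finite_rho1_set] rho1_eq_Max by simp

lemma orank_le_rho1: "b < g \<Longrightarrow> orank (C g) b \<le> rho1 C b g"
  using rho2_pos by (intro rho1_ge_in_set) (force simp: rho1_set_def otp_Int_below)

lemma rho1_walk_le:
  assumes "b < tr C b g 1" "b < g"
  shows "rho1 C b (tr C b g 1) \<le> rho1 C b g"
proof -
  have "rho1_set (tr C b g 1) \<subseteq> rho1_set g"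
    using rho1_set_add[of g 1] rho2_pos[OF assms(2)] assms(2) by auto
  then show ?thesis
    using rho1_eq_Max Max_mono[OF _ rho1_set_nonempty[OF assms(1)] finite_rho1_set] by simp
qed

lemma rho1_of_mem:
  assumes "b \<in> C g"
  shows "rho1 C b g = orank (C g) b"
proof -
  have bg: "b < g" using C_sequence_less[OF C assms] .
  have "(LEAST x. x \<in> C g \<and> b \<le> x) = b" by (rule Least_equality) (use assms in auto)
  then have "tr C b g 1 = b" using bg by simp
  then have "rho2 C b g = 1"
    unfolding rho2_def
  proof (rule Least_equality)
    show "1 \<le> l" if "tr C b g l = b" for l using that bg by (cases l) auto
  qed
  then show ?thesis unfolding rho1_def by (simp add: otp_Int_below lessThan_Suc)
qed

end

lemma rho1_less_m:
  assumes C: "C_sequence C" and bounded: "mu_bounded m C" and b: "ord0 < b" "b < g"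
  shows "rho1 C b g < m"
proof -
  have "v < m" if v: "v \<in> rho1_set C b g" for v
  proof -
    obtain n where n: "n < rho2 C b g" "v = otp (C (tr C b g n) \<inter> below b)"
      using v unfolding rho1_set_def[OF C b(1)] by blast
    let ?\<eta> = "tr C b g n"
    have "b < ?\<eta>" using walk_less_rho2[OF C b(1)] n b by simp
    note step = walk_step[OF C b(1) this]
    have "v = orank (C ?\<eta>) b" using n otp_Int_below by simp
    also have "\<dots> < orank (C ?\<eta>) ?\<eta>" using orank_less_across step by blast
    also have "\<dots> = otp (C ?\<eta>)" using otp_eq_orank[OF C_sequence_subset[OF C]] by simp
    also have "\<dots> \<le> m" using bounded by (simp add: mu_bounded_def)
    finally show "v < m" .
  qed
  moreover have "Max (rho1_set C b g) \<in> rho1_set C b g"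
    using finite_rho1_set[OF C b(1)] rho1_set_nonempty[OF C b(1) b(2)] by (rule Max_in)
  ultimately show ?thesis using rho1_eq_Max[OF C b(1)] by simp
qed

lemma rho1_ge_orank_next:
  assumes C: "C_sequence C" and \<alpha>: "successive (C \<gamma>) \<alpha> \<alpha>'"
    and \<xi>: "\<alpha> < \<xi>" "\<xi> < \<alpha>'" "ord0 < \<xi>"
  shows "orank (C \<alpha>') \<xi> \<le> rho1 C \<xi> \<gamma>"
proof -
  have "\<alpha>' < \<gamma>" using C_sequence_less[OF C] \<alpha> by (auto simp: successive_def)
  then have \<xi>\<gamma>: "\<xi> < \<gamma>" using \<xi>(2) by simp
  have "(LEAST x. x \<in> C \<gamma> \<and> \<xi> \<le> x) = \<alpha>'"
  proof (rule Least_equality)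
    show "\<alpha>' \<in> C \<gamma> \<and> \<xi> \<le> \<alpha>'" using \<alpha> \<xi> by (simp add: successive_def)
    fix y assume "y \<in> C \<gamma> \<and> \<xi> \<le> y"
    then show "\<alpha>' \<le> y" using \<alpha> \<xi>(1) unfolding successive_def by (meson le_less_trans not_le)
  qed
  then have "tr C \<xi> \<gamma> 1 = \<alpha>'" using \<xi>\<gamma> by simp
  then have "orank (C \<alpha>') \<xi> \<le> rho1 C \<xi> \<alpha>'"
    using orank_le_rho1[OF C \<xi>(3) \<xi>(2)] by simp
  also have "\<dots> \<le> rho1 C \<xi> \<gamma>"
    using rho1_walk_le[OF C \<xi>(3), of \<gamma>] \<open>tr C \<xi> \<gamma> 1 = \<alpha>'\<close> \<xi>(2) \<xi>\<gamma> by (simp only:)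
  finally show ?thesis .
qed

lemma rho1_first_step:
  assumes C: "C_sequence C" and \<xi>: "ord0 < \<xi>" "\<xi> < d"
  shows "tr C \<xi> d 1 \<in> C d" and "orank (C d) (tr C \<xi> d 1) \<le> rho1 C \<xi> d"
    and "\<xi> \<noteq> tr C \<xi> d 1 \<Longrightarrow> \<xi> < tr C \<xi> d 1 \<and> rho1 C \<xi> (tr C \<xi> d 1) \<le> rho1 C \<xi> d"
proof -
  let ?\<eta> = "tr C \<xi> d 1"
  have step: "?\<eta> \<in> C d" "\<xi> \<le> ?\<eta>" using walk_step[OF C \<xi>(1), of d 0] \<xi>(2) by simp_all
  then show "?\<eta> \<in> C d" by simp
  have "\<forall>y\<in>C d. \<xi> \<le> y \<longrightarrow> ?\<eta> \<le> y" using \<xi>(2) by (auto intro: Least_le)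
  then have "orank (C d) ?\<eta> = orank (C d) \<xi>" using orank_eq_if_no_elem_between step(2) by blast
  then show "orank (C d) ?\<eta> \<le> rho1 C \<xi> d" using orank_le_rho1[OF C \<xi>] by simp
  assume "\<xi> \<noteq> ?\<eta>"
  then have "\<xi> < ?\<eta>" using step(2) by simp
  then show "\<xi> < ?\<eta> \<and> rho1 C \<xi> ?\<eta> \<le> rho1 C \<xi> d" using rho1_walk_le[OF C \<xi>(1) _ \<xi>(2)] by blast
qed

lemma walk_agrees_through_gap:
  assumes C: "C_sequence C" and \<xi>: "ord0 < \<xi>" "\<xi> < \<gamma>" "\<gamma> \<le> \<delta>"
    and gap: "\<forall>i<rho2 C \<gamma> \<delta>. \<forall>y\<in>C (tr C \<gamma> \<delta> i). \<not> (\<xi> \<le> y \<and> y < \<gamma>)"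
  shows "i \<le> rho2 C \<gamma> \<delta> \<Longrightarrow> tr C \<xi> \<delta> i = tr C \<gamma> \<delta> i"
proof (induction i)
  case (Suc i)
  then have i: "i < rho2 C \<gamma> \<delta>" by simp
  have "\<gamma> < tr C \<gamma> \<delta> i" using walk_less_rho2[OF C _ \<xi>(3) i] \<xi> by (meson less_trans)
  moreover have "(\<lambda>x. x \<in> C (tr C \<gamma> \<delta> i) \<and> \<xi> \<le> x) = (\<lambda>x. x \<in> C (tr C \<gamma> \<delta> i) \<and> \<gamma> \<le> x)"
    using gap i \<xi>(2) by (auto intro!: ext simp: not_less)
  moreover have "\<xi> < tr C \<gamma> \<delta> i" using calculation(1) \<xi>(2) by simp
  ultimately show ?case using Suc i by simp
qed simp

lemma rho1_set_through_gap:
  assumes C: "C_sequence C" and \<xi>: "ord0 < \<xi>" "\<xi> < \<gamma>" "\<gamma> \<le> \<delta>"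
    and gap: "\<forall>i<rho2 C \<gamma> \<delta>. \<forall>y\<in>C (tr C \<gamma> \<delta> i). \<not> (\<xi> \<le> y \<and> y < \<gamma>)"
  shows "rho1_set C \<xi> \<delta> =
    (\<lambda>i. otp (C (tr C \<gamma> \<delta> i) \<inter> below \<xi>)) ` {..<rho2 C \<gamma> \<delta>} \<union> rho1_set C \<xi> \<gamma>"
proof -
  let ?k = "rho2 C \<gamma> \<delta>"
  have \<gamma>: "ord0 < \<gamma>" using \<xi> by simp
  have agree: "i \<le> ?k \<Longrightarrow> tr C \<xi> \<delta> i = tr C \<gamma> \<delta> i" for i
    by (rule walk_agrees_through_gap[OF C \<xi> gap])
  have \<xi>\<delta>: "\<xi> \<le> \<delta>" using \<xi> by simp
  have "?k \<le> rho2 C \<xi> \<delta>"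
  proof (rule ccontr)
    assume "\<not> ?k \<le> rho2 C \<xi> \<delta>"
    then have "\<gamma> < tr C \<xi> \<delta> (rho2 C \<xi> \<delta>)"
      using agree walk_less_rho2[OF C \<gamma> \<xi>(3)] by simp
    then show False using walk_rho2[OF C \<xi>(1) \<xi>\<delta>] \<xi>(2) by simp
  qed
  then have "rho1_set C \<xi> \<delta> =
      (\<lambda>i. otp (C (tr C \<xi> \<delta> i) \<inter> below \<xi>)) ` {..<?k} \<union> rho1_set C \<xi> (tr C \<xi> \<delta> ?k)"
    by (rule rho1_set_add[OF C \<xi>(1) \<xi>\<delta>])
  also have "tr C \<xi> \<delta> ?k = \<gamma>" using agree[of ?k] walk_rho2[OF C \<gamma> \<xi>(3)] by simp
  also have "(\<lambda>i. otp (C (tr C \<xi> \<delta> i) \<inter> below \<xi>)) ` {..<?k} =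
      (\<lambda>i. otp (C (tr C \<gamma> \<delta> i) \<inter> below \<xi>)) ` {..<?k}"
    using agree by (intro image_cong) auto
  finally show ?thesis .
qed

lemma C_bounded_below_cof_m:
  assumes C: "C_sequence C" and bounded: "mu_bounded m C" and "cof g = m" "ord0 < g" "g < \<eta>"
  shows "\<exists>b<g. \<forall>y\<in>C \<eta>. y < g \<longrightarrow> y \<le> b"
proof (cases "g \<in> C \<eta>")
  case True
  show ?thesis
  proof (rule ccontr)
    assume unbounded: "\<not> ?thesis"
    have "cof g \<le> otp (C \<eta> \<inter> below g)"
    proof (rule cof_le_otp)
      show "cofinal_below (C \<eta> \<inter> below g) g"
        using unbounded by (auto simp: cofinal_below_def below_def not_le intro: less_imp_le)
    qed (simp add: below_def)
    also have "\<dots> = orank (C \<eta>) g" by (rule otp_Int_below)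
    also have "\<dots> < orank (C \<eta>) \<eta>" using orank_less True \<open>g < \<eta>\<close> by blast
    also have "\<dots> = otp (C \<eta>)" using otp_eq_orank[OF C_sequence_subset[OF C]] by simp
    also have "\<dots> \<le> m" using bounded by (simp add: mu_bounded_def)
    finally show False using \<open>cof g = m\<close> by simp
  qed
next
  case False
  then have "\<not> is_limit_pt (C \<eta>) g" using C_sequence_closed[OF C \<open>g < \<eta>\<close>] by blast
  then show ?thesis
    using \<open>ord0 < g\<close> unfolding is_limit_pt_def by (meson not_le)
qed

context succ_regular
begin

lemma rho1_sublevel_lesspoll:
  assumes C: "C_sequence C" and \<nu>: "\<nu> < m"
  shows "{\<xi>. ord0 < \<xi> \<and> \<xi> < d \<and> rho1 C \<xi> d \<le> \<nu>} \<prec> below m"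
proof -
  define S where "S d = {\<xi>. ord0 < \<xi> \<and> \<xi> < d \<and> rho1 C \<xi> d \<le> \<nu>}" for d
  define F where "F d = {\<eta> \<in> C d. orank (C d) \<eta> \<le> \<nu>}" for d
  have S_step: "S d \<subseteq> (\<Union>\<eta>\<in>F d. insert \<eta> (S \<eta>))" for d
  proof
    fix \<xi> assume "\<xi> \<in> S d"
    then have \<xi>: "ord0 < \<xi>" "\<xi> < d" "rho1 C \<xi> d \<le> \<nu>" by (auto simp: S_def)
    note first = rho1_first_step[OF C \<xi>(1,2)]
    have "tr C \<xi> d 1 \<in> F d" using first(1,2) \<xi>(3) by (auto simp: F_def)
    moreover have "\<xi> \<in> S (tr C \<xi> d 1)" if "\<xi> \<noteq> tr C \<xi> d 1"
      using first(3)[OF that] \<xi> by (auto simp: S_def)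
    ultimately show "\<xi> \<in> (\<Union>\<eta>\<in>F d. insert \<eta> (S \<eta>))" by blast
  qed
  have F_lepoll: "F d \<lesssim> {..\<nu>}" for d
  proof -
    have "inj_on (orank (C d)) (C d)"
      using strict_mono_on_imp_inj_on orank_bij_betw(2)[OF C_sequence_subset[OF C]] by blast
    then have "inj_on (orank (C d)) (F d)" by (rule inj_on_subset) (auto simp: F_def)
    then show ?thesis unfolding lepoll_def by (intro exI[of _ "orank (C d)"]) (auto simp: F_def)
  qed
  have "(finite {..\<nu>} \<longrightarrow> finite (S d)) \<and> (infinite {..\<nu>} \<longrightarrow> S d \<lesssim> {..\<nu>})" for d
  proof (induction d rule: less_induct)
    case (less d)
    have "\<eta> \<in> F d \<Longrightarrow> \<eta> < d" for \<eta> using C_sequence_less[OF C] by (auto simp: F_def)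
    then have IH: "\<eta> \<in> F d \<Longrightarrow> (finite {..\<nu>} \<longrightarrow> finite (S \<eta>)) \<and> (infinite {..\<nu>} \<longrightarrow> S \<eta> \<lesssim> {..\<nu>})"
      for \<eta> using less by blast
    show ?case
    proof (intro conjI impI)
      assume "finite {..\<nu>}"
      then have "finite (F d)" using F_lepoll[of d] by (meson finite_imageI finite_subset lepoll_iff)
      then show "finite (S d)" using IH \<open>finite {..\<nu>}\<close> S_step finite_subset by blast
    next
      assume inf: "infinite {..\<nu>}"
      have "(\<Union>\<eta>\<in>F d. insert \<eta> (S \<eta>)) \<lesssim> {..\<nu>}"
        using IH inf by (intro UN_lepoll_infinite[OF inf F_lepoll])
          (auto intro: Un_lepoll_infinite[OF inf, of "{_}", simplified] finite_lepoll_infinite)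
      then show "S d \<lesssim> {..\<nu>}" using S_step lepoll_trans subset_imp_lepoll by blast
    qed
  qed
  then show ?thesis unfolding S_def[symmetric]
    using atMost_lesspoll_m[OF \<nu>] finite_lesspoll_m lesspoll_trans1 by blast
qed

end

lemma walk_bounded_below_cof_m:
  assumes C: "C_sequence C" and bounded: "mu_bounded m C" and g: "cof g = m" "ord0 < g" "g < d"
  obtains lam where "lam < g" "\<forall>i<rho2 C g d. \<forall>y\<in>C (tr C g d i). y < g \<longrightarrow> y \<le> lam"
proof -
  let ?k = "rho2 C g d"
  have "\<exists>b<g. \<forall>y\<in>C (tr C g d i). y < g \<longrightarrow> y \<le> b" if "i < ?k" for i
    using C_bounded_below_cof_m[OF C bounded g(1,2)] walk_less_rho2[OF C g(2) _ that] g(3) by simp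
  then obtain bf where bf: "\<And>i. i < ?k \<Longrightarrow> bf i < g \<and> (\<forall>y\<in>C (tr C g d i). y < g \<longrightarrow> y \<le> bf i)"
    by metis
  define lam where "lam = Max (bf ` {..<?k})"
  have "lam \<in> bf ` {..<?k}" unfolding lam_def using rho2_pos[OF C g(2,3)] by (intro Max_in) auto
  then have "lam < g" using bf by auto
  moreover have "i < ?k \<Longrightarrow> bf i \<le> lam" for i unfolding lam_def by (rule Max_ge) auto
  ultimately show ?thesis using that bf by (meson order.trans)
qed

lemma rho1_through_gap:
  assumes C: "C_sequence C" and g: "ord0 < g" "g < d" and \<xi>: "lam < \<xi>" "\<xi> < g"
    and lam: "\<forall>i<rho2 C g d. \<forall>y\<in>C (tr C g d i). y < g \<longrightarrow> y \<le> lam"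
  shows "rho1 C \<xi> d = max (rho1 C g d) (rho1 C \<xi> g)"
proof -
  let ?k = "rho2 C g d"
  have \<xi>_pos: "ord0 < \<xi>" using ord0_le[of lam] \<xi>(1) by (rule le_less_trans)
  have below_eq: "C (tr C g d i) \<inter> below \<xi> = C (tr C g d i) \<inter> below g" if "i < ?k" for i
    using lam that \<xi> by (auto simp: below_def intro: le_less_trans)
  have "\<forall>i<?k. \<forall>y\<in>C (tr C g d i). \<not> (\<xi> \<le> y \<and> y < g)"
    using lam \<xi>(1) by (meson leD order.trans)
  then have "rho1_set C \<xi> d = (\<lambda>i. otp (C (tr C g d i) \<inter> below g)) ` {..<?k} \<union> rho1_set C \<xi> g"
    using rho1_set_through_gap[OF C \<xi>_pos \<xi>(2)] below_eq g(2) by (simp add: less_imp_le)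
  also have "(\<lambda>i. otp (C (tr C g d i) \<inter> below g)) ` {..<?k} = rho1_set C g d"
    by (simp add: rho1_set_def[OF C g(1)])
  finally have "rho1 C \<xi> d = Max (rho1_set C g d \<union> rho1_set C \<xi> g)" using rho1_eq_Max[OF C \<xi>_pos] by simp
  also have "\<dots> = max (rho1 C g d) (rho1 C \<xi> g)"
    using finite_rho1_set[OF C] rho1_set_nonempty[OF C] rho1_eq_Max[OF C] g \<xi>(2) \<xi>_pos
    by (simp add: Max_Un)
  finally show ?thesis .
qed

locale bounded_C_sequence = succ_regular m for m :: "'a::wellorder" +
  fixes C :: "'a \<Rightarrow> 'a set"
  assumes C_sequence: "C_sequence C" and bounded: "mu_bounded m C"
begin

lemma rho1_eventually_max:
  assumes g: "cof g = m" "ord0 < g" "g \<le> d"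
  obtains c lam where "c < m" "lam < g" "\<And>\<xi>. lam < \<xi> \<Longrightarrow> \<xi> < g \<Longrightarrow> rho1 C \<xi> d = max c (rho1 C \<xi> g)"
proof (cases "g = d")
  case True
  show ?thesis by (rule that[of ord0 ord0]) (use True ord0_less_m g ord0_le in \<open>auto simp: max_def\<close>)
next
  case False
  then have "g < d" using g by simp
  obtain lam where "lam < g" "\<forall>i<rho2 C g d. \<forall>y\<in>C (tr C g d i). y < g \<longrightarrow> y \<le> lam"
    using walk_bounded_below_cof_m[OF C_sequence bounded g(1,2) \<open>g < d\<close>] by blast
  then show ?thesis
    using that[of "rho1 C g d" lam] rho1_less_m[OF C_sequence bounded g(2) \<open>g < d\<close>]
      rho1_through_gap[OF C_sequence g(2) \<open>g < d\<close>] by blast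
qed

end

section \<open>The tree \<open>T(\<rho>\<^sub>1)\<close>\<close>

definition height :: "('a::wellorder \<Rightarrow> 'b option) \<Rightarrow> 'a" where
  "height x = (LEAST g. x g = None)"

definition rho1_node :: "('a::wellorder \<Rightarrow> 'a set) \<Rightarrow> 'a \<Rightarrow> 'a \<Rightarrow> 'a \<Rightarrow> 'a option" where
  "rho1_node C g d = (\<lambda>\<xi>. if \<xi> < g then Some (rho1 C \<xi> d) else None)"

lemma mem_T_rho1_iff: "x \<in> T_rho1 C \<longleftrightarrow> (\<exists>g d. g \<le> d \<and> x = rho1_node C g d)"
  by (auto simp: T_rho1_def rho1_node_def)

lemma height_rho1_node [simp]: "height (rho1_node C g d) = g"
  unfolding height_def rho1_node_def by (rule Least_equality) (auto simp: not_less split: if_splits)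

lemma the_rho1_node [simp]: "\<xi> < g \<Longrightarrow> the (rho1_node C g d \<xi>) = rho1 C \<xi> d"
  by (simp add: rho1_node_def)

lemma restrict_rho1_node: "q \<le> g \<Longrightarrow> rho1_node C g d |` below q = rho1_node C q d"
  by (auto simp: restrict_map_def rho1_node_def below_def fun_eq_iff)

lemma rho1_node_ord0: "rho1_node C ord0 d = Map.empty"
  using ord0_le by (auto simp: rho1_node_def fun_eq_iff not_less)

lemma height_empty: "height (Map.empty :: 'a::wellorder \<Rightarrow> 'b option) = ord0"
  by (simp add: height_def ord0_def)

lemma empty_in_T_rho1: "Map.empty \<in> T_rho1 C"
  unfolding mem_T_rho1_iff using rho1_node_ord0[of C ord0] by (intro exI[of _ ord0]) auto

lemma restrict_in_T_rho1:
  assumes "x \<in> T_rho1 C" "q \<le> height x"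
  shows "x |` below q \<in> T_rho1 C" and "height (x |` below q) = q"
proof -
  obtain g d where "g \<le> d" "x = rho1_node C g d" using assms(1) mem_T_rho1_iff by blast
  moreover have "q \<le> g" using assms(2) calculation by simp
  ultimately have "x |` below q = rho1_node C q d" "q \<le> d" by (simp_all add: restrict_rho1_node)
  then show "x |` below q \<in> T_rho1 C" "height (x |` below q) = q"
    unfolding mem_T_rho1_iff by auto
qed

lemma tree_less_restrict:
  assumes "x \<in> T_rho1 C" "q < height x"
  shows "tree_less (x |` below q) x"
proof -
  obtain g d where x: "x = rho1_node C g d" using assms(1) mem_T_rho1_iff by blast
  then have "q < g" using assms(2) by simp
  then have "x q \<noteq> None" by (simp add: x rho1_node_def)
  moreover have "(x |` below q) q = None" by (simp add: below_def)
  ultimately show ?thesis unfolding tree_less_def by (auto simp: map_le_def)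
qed

lemma tree_less_empty: "x \<noteq> Map.empty \<Longrightarrow> tree_less Map.empty x"
  by (simp add: tree_less_def)

lemma not_tree_less_empty: "\<not> tree_less y Map.empty"
  by (auto simp: tree_less_def map_le_def fun_eq_iff dom_def)

lemma tree_less_rho1_node:
  assumes "tree_less (rho1_node C g d) (rho1_node C g' d')"
  shows "g < g'" and "\<xi> < g \<Longrightarrow> rho1 C \<xi> d = rho1 C \<xi> d'"
proof -
  have le: "rho1_node C g d \<subseteq>\<^sub>m rho1_node C g' d'" and ne: "rho1_node C g d \<noteq> rho1_node C g' d'"
    using assms by (auto simp: tree_less_def)
  have agree: "\<xi> < g' \<and> rho1 C \<xi> d = rho1 C \<xi> d'" if "\<xi> < g" for \<xi>
  proof -
    have "\<xi> \<in> dom (rho1_node C g d)" using that by (simp add: rho1_node_def dom_def)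
    then have "rho1_node C g d \<xi> = rho1_node C g' d' \<xi>" using le by (simp add: map_le_def)
    then show ?thesis using that by (simp add: rho1_node_def split: if_splits)
  qed
  then show "\<xi> < g \<Longrightarrow> rho1 C \<xi> d = rho1 C \<xi> d'" by blast
  have "g \<le> g'" using agree by (meson not_le order_less_irrefl)
  moreover have "g \<noteq> g'"
  proof
    assume "g = g'"
    then have "rho1_node C g d = rho1_node C g' d'" using agree by (auto simp: rho1_node_def fun_eq_iff)
    then show False using ne by simp
  qed
  ultimately show "g < g'" by simp
qed

lemma tree_less_T_rho1:
  assumes "s \<in> T_rho1 C" "t \<in> T_rho1 C" "tree_less s t"
  shows "height s < height t" and "\<xi> < height s \<Longrightarrow> s \<xi> = t \<xi>"
proof -
  obtain gs ds gt dt where st: "s = rho1_node C gs ds" "t = rho1_node C gt dt"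
    using assms(1,2) mem_T_rho1_iff by metis
  note less = tree_less_rho1_node[of C gs ds gt dt, folded st, OF assms(3)]
  show "height s < height t" using less(1) st by simp
  assume "\<xi> < height s"
  then have "\<xi> < gs" using st by simp
  then show "s \<xi> = t \<xi>" using less st by (simp add: rho1_node_def)
qed

section \<open>Nodes with a small cofinal sublevel\<close>

definition sublevel :: "('a::wellorder \<Rightarrow> 'a option) \<Rightarrow> 'a \<Rightarrow> 'a set" where
  "sublevel x \<nu> = {\<xi>. \<xi> < height x \<and> the (x \<xi>) \<le> \<nu>}"

definition small_sublevel_cofinal :: "'a::wellorder \<Rightarrow> ('a \<Rightarrow> 'a option) \<Rightarrow> bool" where
  "small_sublevel_cofinal m x \<longleftrightarrow> (\<exists>\<nu><m. cofinal_below (sublevel x \<nu>) (height x))"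

definition sublevel_bound :: "'a::wellorder \<Rightarrow> ('a \<Rightarrow> 'a option) \<Rightarrow> 'a" where
  "sublevel_bound m x = (SOME \<nu>. \<nu> < m \<and> cofinal_below (sublevel x \<nu>) (height x))"

definition sublevel_key :: "'a::wellorder \<Rightarrow> ('a \<Rightarrow> 'a option) \<Rightarrow> 'a \<times> 'a" where
  "sublevel_key m x = (sublevel_bound m x, otp (sublevel x (sublevel_bound m x)))"

lemma sublevel_bound:
  "small_sublevel_cofinal m x \<Longrightarrow>
    sublevel_bound m x < m \<and> cofinal_below (sublevel x (sublevel_bound m x)) (height x)"
  unfolding small_sublevel_cofinal_def sublevel_bound_def by (rule someI_ex) blast

lemma sublevel_subset_below: "sublevel x \<nu> \<subseteq> below (height x)"
  by (auto simp: sublevel_def below_def)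

lemma sublevel_key_antichain:
  assumes s: "s \<in> T_rho1 C" and t: "t \<in> T_rho1 C"
    and small: "small_sublevel_cofinal m t" and key: "sublevel_key m s = sublevel_key m t"
  shows "\<not> tree_less s t"
proof
  assume less: "tree_less s t"
  note agree = tree_less_T_rho1[OF s t less]
  define \<nu> where "\<nu> = sublevel_bound m t"
  have "sublevel_bound m s = \<nu>" using key by (simp add: sublevel_key_def \<nu>_def)
  have "sublevel s \<nu> = sublevel t \<nu> \<inter> below (height s)"
    using agree by (auto simp: sublevel_def below_def)
  then have "otp (sublevel s \<nu>) = orank (sublevel t \<nu>) (height s)" by (simp add: otp_Int_below)
  also obtain y where "y \<in> sublevel t \<nu>" "height s \<le> y"
    using sublevel_bound[OF small] agree(1) by (auto simp: cofinal_below_def \<nu>_def)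
  then have "orank (sublevel t \<nu>) (height s) < orank (sublevel t \<nu>) (height t)"
    by (intro orank_less_across) (auto simp: sublevel_def)
  also have "\<dots> = otp (sublevel t \<nu>)" by (rule otp_eq_orank[OF sublevel_subset_below, symmetric])
  finally show False using key \<open>sublevel_bound m s = \<nu>\<close> by (simp add: sublevel_key_def \<nu>_def)
qed

context succ_regular
begin

lemma sublevel_key_mem:
  assumes C: "C_sequence C" and x: "x \<in> T_rho1 C" and small: "small_sublevel_cofinal m x"
  shows "sublevel_key m x \<in> below m \<times> below m"
proof -
  obtain g d where gd: "g \<le> d" "x = rho1_node C g d" using x mem_T_rho1_iff by blast
  define \<nu> where "\<nu> = sublevel_bound m x"
  have \<nu>: "\<nu> < m" using sublevel_bound[OF small] by (simp add: \<nu>_def)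
  have "sublevel x \<nu> \<subseteq> insert ord0 {\<xi>. ord0 < \<xi> \<and> \<xi> < d \<and> rho1 C \<xi> d \<le> \<nu>}"
  proof
    fix \<xi> assume "\<xi> \<in> sublevel x \<nu>"
    then have "\<xi> < g" "rho1 C \<xi> d \<le> \<nu>" using gd(2) by (auto simp: sublevel_def)
    then show "\<xi> \<in> insert ord0 {\<xi>. ord0 < \<xi> \<and> \<xi> < d \<and> rho1 C \<xi> d \<le> \<nu>}"
      using gd(1) by (simp add: ord0_less_iff less_le_trans)
  qed
  then have "sublevel x \<nu> \<prec> below m"
    using insert_lesspoll_m[OF rho1_sublevel_lesspoll[OF C \<nu>]] lesspoll_trans1 subset_imp_lepoll by blast
  then have "otp (sublevel x \<nu>) < m" by (rule otp_less_if_lesspoll[OF sublevel_subset_below])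
  then show ?thesis using \<nu> by (simp add: sublevel_key_def \<nu>_def below_def)
qed

end

lemma cof_ord0: "cof ord0 = ord0"
proof -
  have "cof ord0 \<le> otp {}" by (rule cof_le_otp) (auto simp: cofinal_below_def not_less ord0_le)
  also have "otp {} = orank {} ord0" by (rule otp_eq_orank) simp
  also have "\<dots> \<le> ord0" by (rule orank_le)
  finally show ?thesis using ord0_le antisym by blast
qed

context bounded_C_sequence
begin

lemma ord0_less_if_cof_eq_m: "cof g = m \<Longrightarrow> ord0 < g"
  using cof_ord0 ord0_less_m by (cases "g = ord0") (auto simp: ord0_less_iff)

lemma limit_height_if_not_small:
  assumes x: "x \<in> T_rho1 C" "height x \<noteq> osucc ord0" and not_small: "\<not> small_sublevel_cofinal m x"
  shows "\<forall>y<height x. \<exists>z. y < z \<and> z < height x"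
proof (rule ccontr)
  obtain g d where gd: "g \<le> d" "x = rho1_node C g d" using x mem_T_rho1_iff by blast
  assume "\<not> ?thesis"
  then obtain y where y: "y < g" "\<forall>z. y < z \<longrightarrow> \<not> z < g" using gd by auto
  show False
  proof (cases "y = ord0")
    case True
    have "osucc ord0 = g" unfolding osucc_def
      by (rule Least_equality) (use y True in \<open>auto simp: not_less\<close>)
    then show False using x(2) gd by simp
  next
    case False
    define \<nu> where "\<nu> = rho1 C y d"
    have "\<nu> < m"
      using rho1_less_m[OF C_sequence bounded] False less_le_trans[OF y(1) gd(1)]
      by (simp add: \<nu>_def ord0_less_iff)
    moreover have "y \<in> sublevel x \<nu>" using y(1) gd(2) by (simp add: sublevel_def \<nu>_def)
    then have "cofinal_below (sublevel x \<nu>) g"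
      using y(2) unfolding cofinal_below_def by (meson not_le)
    ultimately show False using not_small gd by (auto simp: small_sublevel_cofinal_def)
  qed
qed

lemma cof_height_if_not_small:
  assumes x: "x \<in> T_rho1 C" and lim: "\<forall>y<height x. \<exists>z. y < z \<and> z < height x"
    and not_small: "\<not> small_sublevel_cofinal m x"
  shows "cof (height x) = m"
proof -
  obtain g d where gd: "g \<le> d" "x = rho1_node C g d" using x mem_T_rho1_iff by blast
  have Cg: "C g \<subseteq> below g" by (rule C_sequence_subset[OF C_sequence])
  have "\<forall>y<g. \<exists>z. y < z \<and> z < g" using lim gd(2) by simp
  then have "\<forall>b<g. \<exists>\<xi>\<in>C g. b < \<xi>" using C_sequence_cofinal_in_limit[OF C_sequence] by blast
  then have Cg_cofinal: "cofinal_below (C g) g" unfolding cofinal_below_def by (meson less_imp_le)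
  with Cg obtain X where X: "X \<subseteq> below g" "cofinal_below X g" "otp X = cof g"
    by (rule cof_attained)
  have "cof g \<le> otp (C g)" by (rule cof_le_otp[OF Cg Cg_cofinal])
  also have "\<dots> \<le> m" using bounded by (simp add: mu_bounded_def)
  finally have "cof g \<le> m" .
  moreover have "\<not> cof g < m"
  proof
    assume "cof g < m"
    then have X_small: "X \<prec> below m"
      using eqpoll_below_otp[OF X(1)] below_lesspoll_m X(3) eq_lesspoll_trans by metis
    have "X - {ord0} \<prec> below m" by (rule lesspoll_trans1[OF subset_imp_lepoll[OF Diff_subset] X_small])
    moreover have "(\<lambda>\<xi>. rho1 C \<xi> d) ` (X - {ord0}) \<subseteq> below m"
    proof
      fix v assume "v \<in> (\<lambda>\<xi>. rho1 C \<xi> d) ` (X - {ord0})"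
      then obtain \<xi> where "\<xi> \<in> X" "\<xi> \<noteq> ord0" "v = rho1 C \<xi> d" by auto
      moreover have "\<xi> < d" using X(1) gd(1) \<open>\<xi> \<in> X\<close> by (auto simp: below_def intro: less_le_trans)
      ultimately show "v \<in> below m"
        using rho1_less_m[OF C_sequence bounded] by (simp add: below_def ord0_less_iff)
    qed
    ultimately obtain \<nu> where \<nu>: "\<nu> < m" "\<forall>\<xi>\<in>X - {ord0}. rho1 C \<xi> d < \<nu>"
      by (rule lesspoll_m_bounded)
    have "cofinal_below (sublevel x \<nu>) g"
    proof (unfold cofinal_below_def, intro allI impI)
      fix b assume "b < g"
      then obtain z where z: "b < z" "z < g" using lim gd(2) by auto
      then obtain \<xi> where \<xi>: "z \<le> \<xi>" "\<xi> \<in> X" using X(2) by (auto simp: cofinal_below_def)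
      have "b < \<xi>" using z(1) \<xi>(1) by (rule less_le_trans)
      then have "\<xi> \<noteq> ord0" "\<xi> < g" using X(1) \<xi>(2) ord0_le[of b] by (auto simp: below_def)
      then have "\<xi> \<in> sublevel x \<nu>"
        using \<nu>(2) gd(2) \<xi>(2) by (auto simp: sublevel_def intro: less_imp_le)
      then show "\<exists>\<xi>\<in>sublevel x \<nu>. b \<le> \<xi>" using \<open>b < \<xi>\<close> less_imp_le by blast
    qed
    then show False using not_small \<nu>(1) gd by (auto simp: small_sublevel_cofinal_def)
  qed
  ultimately show ?thesis using gd by simp
qed

end

section \<open>Nodes of club height\<close>

definition gap_condition :: "('a::wellorder \<Rightarrow> 'a set) \<Rightarrow> 'a \<Rightarrow> bool" where
  "gap_condition C d \<longleftrightarrow> (\<forall>a\<in>C d. \<forall>b\<in>C d. a < b \<and> \<not> (\<exists>x\<in>C d. a < x \<and> x < b) \<longrightarrow>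
     osucc (otp (C d \<inter> below a)) < otp (C b \<inter> below a))"

lemma gap_conditionD:
  "gap_condition C d \<Longrightarrow> successive (C d) a b \<Longrightarrow> osucc (orank (C d) a) < orank (C b) a"
  unfolding gap_condition_def successive_def by (auto simp: otp_Int_below)

text \<open>The first conjunct rules out the junk value of \<open>osucc\<close>
  at a greatest element.\<close>

definition unit_steps_from :: "('a::wellorder \<Rightarrow> 'a set) \<Rightarrow> ('a \<Rightarrow> 'a option) \<Rightarrow> 'a \<Rightarrow> bool" where
  "unit_steps_from C x p \<longleftrightarrow> p \<in> C (height x) \<and> ord0 < p \<and> p < height x \<and>
     (\<forall>\<alpha> \<alpha>'. successive (C (height x)) \<alpha> \<alpha>' \<and> p \<le> \<alpha> \<longrightarrow>
        the (x \<alpha>) < osucc (the (x \<alpha>)) \<and> the (x \<alpha>') = osucc (the (x \<alpha>)) \<and>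
        (\<forall>\<xi>. \<alpha> < \<xi> \<and> \<xi> < \<alpha>' \<longrightarrow> osucc (the (x \<alpha>)) < the (x \<xi>)))"

definition unit_steps_point :: "('a::wellorder \<Rightarrow> 'a set) \<Rightarrow> ('a \<Rightarrow> 'a option) \<Rightarrow> 'a" where
  "unit_steps_point C x = (SOME p. unit_steps_from C x p)"

lemma unit_steps_from_rho1_node:
  assumes C: "C_sequence C" and gap: "gap_condition C g" and "g \<le> d"
    and max: "\<And>\<xi>. lam < \<xi> \<Longrightarrow> \<xi> < g \<Longrightarrow> rho1 C \<xi> d = max c (rho1 C \<xi> g)"
    and p: "p \<in> C g" "lam < p" "c \<le> orank (C g) p"
  shows "unit_steps_from C (rho1_node C g d) p"
  unfolding unit_steps_from_def height_rho1_node
proof (intro conjI allI impI p(1))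
  show "ord0 < p" using ord0_le[of lam] p(2) by (rule le_less_trans)
  show "p < g" using C_sequence_less[OF C p(1)] .
  fix \<alpha> \<alpha>' assume \<alpha>: "successive (C g) \<alpha> \<alpha>' \<and> p \<le> \<alpha>"
  then have in_C: "\<alpha> \<in> C g" "\<alpha>' \<in> C g" and "\<alpha> < \<alpha>'" by (auto simp: successive_def)
  then have below_g: "\<alpha> < g" "\<alpha>' < g" using C_sequence_less[OF C] by auto
  have above: "lam < \<alpha>" "lam < \<alpha>'" using p(2) \<alpha> \<open>\<alpha> < \<alpha>'\<close> by auto
  then have pos: "ord0 < \<alpha>" "ord0 < \<alpha>'" using ord0_le le_less_trans by blast+
  have c_le: "c \<le> orank (C g) \<alpha>" using p(3) orank_mono[of p \<alpha> "C g"] \<alpha> by simp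
  have val_\<alpha>: "rho1 C \<alpha> d = orank (C g) \<alpha>"
    using max[OF above(1) below_g(1)] rho1_of_mem[OF C pos(1) in_C(1)] c_le by simp
  have less_succ: "orank (C g) \<alpha> < osucc (orank (C g) \<alpha>)"
    using less_osucc orank_less[OF in_C(1) below_g(1)] by blast
  have succ: "orank (C g) \<alpha>' = osucc (orank (C g) \<alpha>)" using \<alpha> orank_successive by blast
  show "the (rho1_node C g d \<alpha>) < osucc (the (rho1_node C g d \<alpha>))"
    using val_\<alpha> less_succ below_g by simp
  show "the (rho1_node C g d \<alpha>') = osucc (the (rho1_node C g d \<alpha>))"
    using max[OF above(2) below_g(2)] rho1_of_mem[OF C pos(2) in_C(2)] succ val_\<alpha> below_g
      order.trans[OF c_le less_imp_le[OF less_succ]]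
    by (simp add: max_def)
  fix \<xi> assume \<xi>: "\<alpha> < \<xi> \<and> \<xi> < \<alpha>'"
  then have \<xi>_g: "\<xi> < g" "lam < \<xi>" "ord0 < \<xi>" using below_g above pos by auto
  have "osucc (orank (C g) \<alpha>) < orank (C \<alpha>') \<alpha>" using gap_conditionD[OF gap] \<alpha> by blast
  also have "\<dots> \<le> orank (C \<alpha>') \<xi>" using \<xi> by (intro orank_mono) (simp add: less_imp_le)
  also have "\<dots> \<le> rho1 C \<xi> g" using rho1_ge_orank_next[OF C _ _ _ \<xi>_g(3)] \<alpha> \<xi> by blast
  also have "\<dots> \<le> rho1 C \<xi> d" using max[OF \<xi>_g(2,1)] by simp
  finally show "osucc (the (rho1_node C g d \<alpha>)) < the (rho1_node C g d \<xi>)"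
    using val_\<alpha> below_g \<xi>_g by simp
qed

lemma last_C_point_below_cof_m:
  assumes C: "C_sequence C" and bounded: "mu_bounded m C"
    and "cof gs = m" "gs < gt" "p \<in> C gt" "p < gs"
  obtains \<alpha> where "\<alpha> \<in> C gt" "p \<le> \<alpha>" "\<alpha> < gs" "\<forall>y\<in>C gt. \<alpha> < y \<longrightarrow> gs \<le> y"
proof -
  have "ord0 < gs" using ord0_le[of p] \<open>p < gs\<close> by (rule le_less_trans)
  then obtain b where b: "b < gs" "\<forall>y\<in>C gt. y < gs \<longrightarrow> y \<le> b"
    using C_bounded_below_cof_m[OF C bounded] assms(3,4) by blast
  define b' where "b' = max b p"
  have "b' < gs" using b(1) \<open>p < gs\<close> by (simp add: b'_def)
  have "p \<le> b'" by (simp add: b'_def)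
  have "b' < gt" using \<open>b' < gs\<close> \<open>gs < gt\<close> by (rule less_trans)
  obtain \<alpha> where \<alpha>: "\<alpha> \<in> C gt" "p \<le> \<alpha>" "\<alpha> \<le> b'" "\<forall>y\<in>C gt. p \<le> y \<and> y \<le> b' \<longrightarrow> y \<le> \<alpha>"
    by (rule C_sequence_max_below[OF C \<open>p \<in> C gt\<close> \<open>p \<le> b'\<close> \<open>b' < gt\<close>])
  have "gs \<le> y" if "y \<in> C gt" "\<alpha> < y" for y
  proof (rule ccontr)
    assume "\<not> gs \<le> y"
    then have "y \<le> b" using b(2) that(1) by (simp add: not_le)
    then have "y \<le> b'" by (simp add: b'_def le_max_iff_disj)
    then show False using \<alpha>(2,4) that by (meson leD order.trans less_imp_le)
  qed
  moreover have "\<alpha> < gs" using \<alpha>(3) \<open>b' < gs\<close> by (rule le_less_trans)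
  ultimately show ?thesis using that \<alpha>(1,2) by blast
qed

context bounded_C_sequence
begin

lemma unit_steps_from_exists:
  assumes x: "x \<in> T_rho1 C" and g: "cof (height x) = m" "gap_condition C (height x)"
  shows "\<exists>p. unit_steps_from C x p"
proof -
  obtain g d where gd: "g \<le> d" "x = rho1_node C g d" using x mem_T_rho1_iff by blast
  have g_pos: "ord0 < g" and cof_g: "cof g = m" using g gd ord0_less_if_cof_eq_m by auto
  obtain c lam where c: "c < m" "lam < g"
    and max: "\<And>\<xi>. lam < \<xi> \<Longrightarrow> \<xi> < g \<Longrightarrow> rho1 C \<xi> d = max c (rho1 C \<xi> g)"
    using rho1_eventually_max[OF cof_g g_pos gd(1)] by blast
  have C_cofinal: "\<forall>b<g. \<exists>y\<in>C g. b < y"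
    using C_sequence_cofinal_in_limit[OF C_sequence limit_if_cof_eq_m[OF cof_g]] by blast
  then have "m \<le> otp (C g)"
    using cof_le_otp[OF C_sequence_subset[OF C_sequence], of g] cof_g
    by (auto simp: cofinal_below_def intro: less_imp_le)
  then have "c < orank (C g) g" using c(1) otp_eq_orank[OF C_sequence_subset[OF C_sequence]] by simp
  then obtain y1 where y1: "y1 \<in> C g" "orank (C g) y1 = c" using orank_attained by blast
  obtain y2 where y2: "y2 \<in> C g" "lam < y2" using C_cofinal c(2) by blast
  have "max y1 y2 \<in> C g" "lam < max y1 y2" "c \<le> orank (C g) (max y1 y2)"
    using y1 y2 orank_mono[of y1 "max y1 y2" "C g"] by (auto simp: max_def)
  then show ?thesis
    using unit_steps_from_rho1_node[OF C_sequence _ gd(1) max] g(2) gd(2) by auto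
qed

lemma unit_steps_antichain:
  assumes s: "s \<in> T_rho1 C" and t: "t \<in> T_rho1 C" and cof: "cof (height s) = m"
    and ps: "unit_steps_from C s p" and pt: "unit_steps_from C t p"
  shows "\<not> tree_less s t"
proof
  assume less: "tree_less s t"
  note agree = tree_less_T_rho1[OF s t less]
  let ?gs = "height s" and ?gt = "height t"
  have p: "p \<in> C ?gs" "p \<in> C ?gt" "p < ?gs" using ps pt by (auto simp: unit_steps_from_def)
  obtain \<alpha> where \<alpha>: "\<alpha> \<in> C ?gt" "p \<le> \<alpha>" "\<alpha> < ?gs" "\<forall>y\<in>C ?gt. \<alpha> < y \<longrightarrow> ?gs \<le> y"
    using last_C_point_below_cof_m[OF C_sequence bounded cof agree(1) p(2,3)] by blast
  obtain y where "y \<in> C ?gt" "?gs \<le> y"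
    using C_sequence_unbounded[OF C_sequence ord0_less_if_cof_eq_m[OF cof] agree(1)] by blast
  then obtain \<beta> where \<beta>: "successive (C ?gt) \<alpha> \<beta>"
    using successive_exists[OF _ \<alpha>(1)] \<alpha>(3) by (meson less_le_trans)
  have "?gs \<le> \<beta>" using \<alpha>(4) \<beta> by (auto simp: successive_def)
  obtain \<alpha>s where \<alpha>s: "\<alpha>s \<in> C ?gs" "p \<le> \<alpha>s" "\<alpha>s \<le> \<alpha>" "\<forall>y\<in>C ?gs. p \<le> y \<and> y \<le> \<alpha> \<longrightarrow> y \<le> \<alpha>s"
    using C_sequence_max_below[OF C_sequence p(1) \<alpha>(2,3)] by blast
  obtain y' where "y' \<in> C ?gs" "\<alpha> < y'"
    using C_sequence_cofinal_in_limit[OF C_sequence limit_if_cof_eq_m[OF cof] \<alpha>(3)] by blast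
  then obtain \<alpha>2 where \<alpha>2: "successive (C ?gs) \<alpha>s \<alpha>2"
    using successive_exists[OF _ \<alpha>s(1)] \<alpha>s(3) by (meson le_less_trans)
  have "\<alpha> < \<alpha>2" using \<alpha>2 \<alpha>s(2,4) by (auto simp: successive_def not_le intro: order.trans)
  moreover have "\<alpha>2 < ?gs" using \<alpha>2 C_sequence_less[OF C_sequence] by (auto simp: successive_def)
  ultimately have t_jump: "the (t \<alpha>) < osucc (the (t \<alpha>))" "osucc (the (t \<alpha>)) < the (t \<alpha>2)"
    using pt \<alpha>(2) \<beta> \<open>?gs \<le> \<beta>\<close> unfolding unit_steps_from_def by (meson less_le_trans)+
  have s_step: "the (s \<alpha>2) = osucc (the (s \<alpha>s))" "\<alpha>s < \<alpha> \<Longrightarrow> osucc (the (s \<alpha>s)) < the (s \<alpha>)"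
    using ps \<alpha>2 \<alpha>s(2) \<open>\<alpha> < \<alpha>2\<close> unfolding unit_steps_from_def by blast+
  have same: "s \<alpha> = t \<alpha>" "s \<alpha>2 = t \<alpha>2" using agree(2) \<alpha>(3) \<open>\<alpha>2 < ?gs\<close> by auto
  show False
  proof (cases "\<alpha>s = \<alpha>")
    case True
    then show False using t_jump(2) s_step(1) same by simp
  next
    case False
    then have "osucc (the (s \<alpha>s)) < the (t \<alpha>)" using s_step(2) \<alpha>s(3) same(1) by simp
    then have "osucc (the (s \<alpha>s)) < the (t \<alpha>2)" using t_jump by (meson less_trans)
    then show False using s_step(1) same(2) by simp
  qed
qed

end

lemma club_osup_below:
  assumes club: "club D" and "\<gamma> \<notin> D" "d \<in> D" "d < \<gamma>"
  shows "osup (D \<inter> below \<gamma>) < \<gamma>" and "\<forall>d\<in>D. d < \<gamma> \<longrightarrow> d \<le> osup (D \<inter> below \<gamma>)"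
proof -
  let ?q = "osup (D \<inter> below \<gamma>)"
  have "\<forall>z\<in>D \<inter> below \<gamma>. z \<le> \<gamma>" by (auto simp: below_def)
  then show "\<forall>d\<in>D. d < \<gamma> \<longrightarrow> d \<le> ?q" using osup_upper by (auto simp: below_def)
  have "?q \<le> \<gamma>" by (rule osup_least) (auto simp: below_def)
  moreover have "?q \<noteq> \<gamma>"
  proof
    assume q: "?q = \<gamma>"
    have "\<exists>g\<in>D. b < g \<and> g < \<gamma>" if "b < \<gamma>" for b
    proof (rule ccontr)
      assume "\<not> (\<exists>g\<in>D. b < g \<and> g < \<gamma>)"
      then have "\<forall>d\<in>D \<inter> below \<gamma>. d \<le> b" by (auto simp: below_def not_less)
      then have "?q \<le> b" by (rule osup_least)
      then show False using q that by simp
    qed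
    then have "is_limit_pt D \<gamma>" using assms(3,4) unfolding is_limit_pt_def by blast
    then show False using club assms(2) by (simp add: club_def)
  qed
  ultimately show "?q < \<gamma>" by simp
qed

section \<open>The regressive map\<close>

text \<open>Nodes of height \<open>osucc ord0\<close> also go to the root: the walk down to \<open>ord0\<close> is not
  controlled by the \<open>C\<close>-sequence, so \<open>\<rho>\<^sub>1(0, \<delta>)\<close> need not be below \<open>m\<close>.\<close>

definition regressive_map ::
    "'a::wellorder \<Rightarrow> ('a \<Rightarrow> 'a set) \<Rightarrow> 'a set \<Rightarrow> ('a \<Rightarrow> 'a option) \<Rightarrow> 'a \<Rightarrow> 'a option" where
  "regressive_map m C D x =
    (if height x = osucc ord0 \<or> small_sublevel_cofinal m x then Map.empty
     else if height x \<in> D then x |` below (unit_steps_point C x)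
     else if \<exists>d\<in>D. d < height x then x |` below (osup (D \<inter> below (height x)))
     else Map.empty)"

locale gap_club = bounded_C_sequence m C for m :: "'a::wellorder" and C +
  fixes D :: "'a set"
  assumes club: "club D" and gaps: "\<forall>d\<in>D. cof d = m \<longrightarrow> gap_condition C d"
begin

abbreviation f :: "('a \<Rightarrow> 'a option) \<Rightarrow> 'a \<Rightarrow> 'a option" where
  "f \<equiv> regressive_map m C D"

lemma unit_steps_point_spec:
  assumes "x \<in> T_rho1 C" "height x \<noteq> osucc ord0" "\<not> small_sublevel_cofinal m x" "height x \<in> D"
  shows "unit_steps_from C x (unit_steps_point C x)" and "cof (height x) = m"
proof -
  show cof: "cof (height x) = m"
    using cof_height_if_not_small limit_height_if_not_small assms(1-3) by blast
  show "unit_steps_from C x (unit_steps_point C x)"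
    unfolding unit_steps_point_def
    using unit_steps_from_exists[OF assms(1) cof] gaps assms(4) cof by (blast intro: someI_ex)
qed

lemma regressive_map_cases:
  assumes "x \<in> T_rho1 C"
  shows "f x = Map.empty \<or> (\<exists>q<height x. f x = x |` below q)"
proof -
  have "unit_steps_point C x < height x"
    if "height x \<noteq> osucc ord0" "\<not> small_sublevel_cofinal m x" "height x \<in> D"
    using unit_steps_point_spec[OF assms that] by (simp add: unit_steps_from_def)
  moreover have "osup (D \<inter> below (height x)) < height x" if "height x \<notin> D" "d \<in> D" "d < height x" for d
    using club_osup_below[OF club that] by blast
  ultimately show ?thesis unfolding regressive_map_def by (auto split: if_splits)
qed

lemma regressive_map_in_T_rho1: "x \<in> T_rho1 C \<Longrightarrow> f x \<in> T_rho1 C"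
  using regressive_map_cases restrict_in_T_rho1(1) empty_in_T_rho1 less_imp_le by metis

lemma tree_less_regressive_map: "x \<in> T_rho1 C \<Longrightarrow> x \<noteq> Map.empty \<Longrightarrow> tree_less (f x) x"
  using regressive_map_cases tree_less_restrict tree_less_empty by metis

lemma antichain_sublevel_key_class: "antichain_t {x \<in> T_rho1 C. small_sublevel_cofinal m x \<and> sublevel_key m x = k}"
  unfolding antichain_t_def using sublevel_key_antichain by (metis (mono_tags, lifting) mem_Collect_eq)

lemma antichain_level: "antichain_t {x \<in> T_rho1 C. height x = \<gamma>}"
  unfolding antichain_t_def using tree_less_T_rho1(1) by fastforce

lemma height_regressive_map_club:
  assumes "x \<in> T_rho1 C" "height x \<noteq> osucc ord0" "\<not> small_sublevel_cofinal m x" "height x \<in> D"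
  shows "height (f x) = unit_steps_point C x"
proof -
  have "unit_steps_point C x < height x"
    using unit_steps_point_spec(1)[OF assms] by (simp add: unit_steps_from_def)
  moreover have "f x = x |` below (unit_steps_point C x)"
    using assms(2-4) by (simp add: regressive_map_def)
  ultimately show ?thesis using restrict_in_T_rho1(2)[OF assms(1)] by simp
qed

lemma antichain_club_fibre:
  "antichain_t {x \<in> T_rho1 C. height x \<noteq> osucc ord0 \<and> \<not> small_sublevel_cofinal m x \<and> height x \<in> D \<and> f x = z}"
  unfolding antichain_t_def
proof (intro ballI notI, elim CollectE conjE)
  fix s t
  assume s: "s \<in> T_rho1 C" "height s \<noteq> osucc ord0" "\<not> small_sublevel_cofinal m s" "height s \<in> D" "f s = z"
    and t: "t \<in> T_rho1 C" "height t \<noteq> osucc ord0" "\<not> small_sublevel_cofinal m t" "height t \<in> D" "f t = z"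
    and less: "tree_less s t"
  have "unit_steps_point C s = unit_steps_point C t"
    using height_regressive_map_club[OF s(1-4)] height_regressive_map_club[OF t(1-4)] s(5) t(5) by simp
  then show False
    using unit_steps_antichain[OF s(1) t(1) unit_steps_point_spec(2)[OF s(1-4)]
        unit_steps_point_spec(1)[OF s(1-4)]] unit_steps_point_spec(1)[OF t(1-4)] less
    by simp
qed

lemma height_le_next_club_point:
  assumes x: "x \<in> T_rho1 C" and "\<not> small_sublevel_cofinal m x"
    and not_club: "height x = osucc ord0 \<or> height x \<notin> D"
    and dz: "dz \<in> D" "height (f x) < dz"
  shows "height x \<le> dz"
proof (cases "height x = osucc ord0")
  case True
  then have "f x = Map.empty" by (simp add: regressive_map_def)
  then have "ord0 < dz" using dz(2) by (simp add: height_empty)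
  then show ?thesis using True osucc_le by simp
next
  case False
  then have "height x \<notin> D" using not_club by simp
  show ?thesis
  proof (rule ccontr)
    assume "\<not> height x \<le> dz"
    then have "dz < height x" by simp
    let ?q = "osup (D \<inter> below (height x))"
    have q: "?q < height x" "dz \<le> ?q" using club_osup_below[OF club \<open>height x \<notin> D\<close> dz(1) \<open>dz < height x\<close>] dz(1) \<open>dz < height x\<close> by auto
    have "f x = x |` below ?q"
      using False assms(2) \<open>height x \<notin> D\<close> dz(1) \<open>dz < height x\<close> by (auto simp: regressive_map_def)
    then show False using restrict_in_T_rho1(2)[OF x less_imp_le[OF q(1)]] q(2) dz(2) by simp
  qed
qed

lemma regressive_map_fibre_antichains:
  assumes "z \<in> T_rho1 C"
  shows "\<exists>\<A>. \<A> \<lesssim> below m \<and> (\<forall>A\<in>\<A>. antichain_t A) \<and> {x \<in> T_rho1 C. f x = z} \<subseteq> \<Union>\<A>"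
proof -
  obtain w where w: "height z < w" using no_greatest[of "height z"] by (elim exE)
  have "\<exists>d\<in>D. w \<le> d" using club unfolding club_def by (elim conjE allE)
  then obtain d0 where d0: "d0 \<in> D" "w \<le> d0" by (elim bexE)
  have "height z < d0" using w d0(2) by (rule less_le_trans)
  define dz where "dz = (LEAST d. d \<in> D \<and> height z < d)"
  have "dz \<in> D \<and> height z < dz"
    unfolding dz_def by (rule LeastI[of _ d0]) (use d0 \<open>height z < d0\<close> in simp)
  then have dz: "dz \<in> D" "height z < dz" by simp_all
  define K where "K = (\<lambda>k. {x \<in> T_rho1 C. small_sublevel_cofinal m x \<and> sublevel_key m x = k}) ` (below m \<times> below m)"
  define L where "L = (\<lambda>\<gamma>. {x \<in> T_rho1 C. height x = \<gamma>}) ` {..dz}"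
  define U where "U = {x \<in> T_rho1 C. height x \<noteq> osucc ord0 \<and> \<not> small_sublevel_cofinal m x \<and> height x \<in> D \<and> f x = z}"
  have "K \<lesssim> below m"
    using image_lepoll times_self_lepoll_infinite[OF infinite_below_m] lepoll_trans unfolding K_def by blast
  moreover have "L \<lesssim> below m" using image_lepoll atMost_lepoll_m lepoll_trans unfolding L_def by blast
  ultimately have "K \<union> L \<lesssim> below m" by (rule Un_lepoll_infinite[OF infinite_below_m])
  then have "K \<union> L \<union> {U} \<lesssim> below m"
    using Un_lepoll_infinite[OF infinite_below_m _ finite_lepoll_m[of "{U}"]] by simp
  moreover have "\<forall>A\<in>K \<union> L \<union> {U}. antichain_t A"
    unfolding K_def L_def U_def using antichain_sublevel_key_class antichain_level antichain_club_fibre by blast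
  moreover have "{x \<in> T_rho1 C. f x = z} \<subseteq> \<Union>(K \<union> L \<union> {U})"
  proof
    fix x assume x: "x \<in> {x \<in> T_rho1 C. f x = z}"
    consider "small_sublevel_cofinal m x" | "\<not> small_sublevel_cofinal m x" "height x \<noteq> osucc ord0" "height x \<in> D"
      | "\<not> small_sublevel_cofinal m x" "height x = osucc ord0 \<or> height x \<notin> D" by blast
    then show "x \<in> \<Union>(K \<union> L \<union> {U})"
    proof cases
      case 1
      then show ?thesis using x sublevel_key_mem[OF C_sequence] unfolding K_def by blast
    next
      case 2
      then show ?thesis using x unfolding U_def by blast
    next
      case 3
      then have "height x \<le> dz" using height_le_next_club_point dz x by blast
      then show ?thesis using x unfolding L_def by blast
    qed
  qed
  ultimately show ?thesis by blast
qed

end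

theorem lemma6p4:
  fixes m :: "'a::wellorder" and C :: "'a \<Rightarrow> 'a set" and D :: "'a set"
  assumes "is_succ_of_regular m"
    and "C_sequence C" and "mu_bounded m C" and "weakly_coherent m C"
    and "club D"
    and "\<forall>d\<in>D. cof d = m \<longrightarrow>
           (\<forall>a\<in>C d. \<forall>b\<in>C d. a < b \<and> \<not> (\<exists>x\<in>C d. a < x \<and> x < b) \<longrightarrow>
              osucc (otp (C d \<inter> below a)) < otp (C b \<inter> below a))"
  shows "special m (T_rho1 C)"
proof -
  \<comment> \<open>Weak coherence only makes \<open>T(\<rho>\<^sub>1)\<close> a \<open>\<mu>\<^sup>+\<close>-tree, which \<open>special\<close> does not demand.\<close>
  interpret gap_club m C D
    using assms(1-3,5,6) by unfold_locales (simp_all add: gap_condition_def)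
  show ?thesis
    unfolding special_def
  proof (intro exI[of _ f] conjI ballI impI)
    show "f x \<in> T_rho1 C" if "x \<in> T_rho1 C" for x using regressive_map_in_T_rho1 that .
    show "tree_less (f x) x" if "x \<in> T_rho1 C" "\<exists>y\<in>T_rho1 C. tree_less y x" for x
      using tree_less_regressive_map not_tree_less_empty that by blast
    show "\<exists>\<A>. \<A> \<lesssim> below m \<and> (\<forall>A\<in>\<A>. antichain_t A) \<and> {x \<in> T_rho1 C. f x = z} \<subseteq> \<Union>\<A>"
      if "z \<in> T_rho1 C" for z using regressive_map_fibre_antichains that .
  qed
qed

end
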